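(* Let $n\ge2$ and $k$ a field. Then $\mathsf{G}^0([n],k)$ is free abelian of rank $3$ with basis $[J_{0,n}]$, $[S_{[n]}]$, $T_{[n]}=[J_{0,n-1}]+[J_{1,n}]-[J_{1,n-1}]$, and $\mathsf{E}^0([n],k)$ is free abelian of rank $2$ with basis $[J_{0,n}]$, $T_{[n]}$. In particular the natural map $\mathsf{E}^0([n],k)\to\mathsf{G}^0([n],k)$ is split injective with cokernel generated by the image of $[S_{[n]}]$ (infinite cyclic).
   Context: $[n]$ is the poset $0<1<\cdots<n$ viewed as a category; $k[n]$-modules are functors to finite-dimensional $k$-vector spaces and $\mathrm{Gr}$ is the split Grothendieck group. For $0\le a\le b\le n$, $J_{a,b}$ is the module with value $k$ at $i\in\{a,\dots,b\}$, $0$ elsewhere, and identity maps $J_{a,b}(i<j)$ for $a\le i\le j\le b$. $S_{[n]}$ is the module with value $k$ everywhere and zero maps on strict relations. $\mathcal{E}^{[n]}_1$ is the poset of strict relations $i<j$ (written $ij$) with $ij\le i'j'$ iff $i\le i'$ and $j\le j'$; $\mathcal{G}^{[n]}_1$ is the poset of strict relations with $ij\le i'j'$ iff equal or $j\le i'$. In both, $\partial_0(ij)=j$, $\partial_1(ij)=i$. $\mathsf{E}^0([n],k)$ (resp. $\mathsf{G}^0([n],k)$) is the kernel of $\partial_0^*-\partial_1^*:\mathrm{Gr}(k[n])\to\mathrm{Gr}(k\mathcal{E}^{[n]}_1)$ (resp. $\to\mathrm{Gr}(k\mathcal{G}^{[n]}_1)$), with $F^*M=M\circ F$. The natural map $\mathsf{E}^0\to\mathsf{G}^0$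 is induced by the inclusion $\mathcal{G}^{[n]}_1\subseteq\mathcal{E}^{[n]}_1$ (identity on $\mathrm{Gr}(k[n])$). *)

theory Defs
  imports "Jordan_Normal_Form.Matrix"
begin

text \<open>A representation of a poset (carrier P, order ord) over a field 'a:
  a finite-dimensional space k^(d x) at each point x, and a matrix f x y : k^(d x) -> k^(d y)
  for each relation x ord y, functorially.  Values outside the carrier / on non-relations are junk.\<close>

type_synonym ('p,'a) rep = "('p \<Rightarrow> nat) \<times> ('p \<Rightarrow> 'p \<Rightarrow> 'a mat)"

text \<open>Elements of the split Grothendieck group, as formal differences [M] - [N].\<close>
type_synonym ('p,'a) grel = "('p,'a) rep \<times> ('p,'a) rep"

definition is_rep :: "'p set \<Rightarrow> ('p \<Rightarrow> 'p \<Rightarrow> bool) \<Rightarrow> ('p,'a::field) rep \<Rightarrow> bool" where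
  "is_rep P ord M \<longleftrightarrow>
     (\<forall>x\<in>P. \<forall>y\<in>P. ord x y \<longrightarrow> snd M x y \<in> carrier_mat (fst M y) (fst M x)) \<and>
     (\<forall>x\<in>P. snd M x x = 1\<^sub>m (fst M x)) \<and>
     (\<forall>x\<in>P. \<forall>y\<in>P. \<forall>z\<in>P. ord x y \<longrightarrow> ord y z \<longrightarrow> snd M x z = snd M y z * snd M x y)"

definition rep_iso :: "'p set \<Rightarrow> ('p \<Rightarrow> 'p \<Rightarrow> bool) \<Rightarrow> ('p,'a::field) rep \<Rightarrow> ('p,'a) rep \<Rightarrow> bool" where
  "rep_iso P ord M N \<longleftrightarrow> (\<exists>\<phi> \<psi>.
     (\<forall>x\<in>P. \<phi> x \<in> carrier_mat (fst N x) (fst M x) \<and> \<psi> x \<in> carrier_mat (fst M x) (fst N x) \<and>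
            \<phi> x * \<psi> x = 1\<^sub>m (fst N x) \<and> \<psi> x * \<phi> x = 1\<^sub>m (fst M x)) \<and>
     (\<forall>x\<in>P. \<forall>y\<in>P. ord x y \<longrightarrow> snd N x y * \<phi> x = \<phi> y * snd M x y))"

definition zero_rep :: "('p,'a::field) rep" where
  "zero_rep = (\<lambda>_. 0, \<lambda>_ _. 0\<^sub>m 0 0)"

definition dsum :: "('p,'a::field) rep \<Rightarrow> ('p,'a) rep \<Rightarrow> ('p,'a) rep" where
  "dsum M N = (\<lambda>x. fst M x + fst N x,
     \<lambda>x y. four_block_mat (snd M x y) (0\<^sub>m (fst M y) (fst N x))
                          (0\<^sub>m (fst N y) (fst M x)) (snd N x y))"

fun rep_pow :: "('p,'a::field) rep \<Rightarrow> nat \<Rightarrow> ('p,'a) rep" where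
  "rep_pow M 0 = zero_rep"
| "rep_pow M (Suc m) = dsum M (rep_pow M m)"

definition pull :: "('q \<Rightarrow> 'p) \<Rightarrow> ('p,'a::field) rep \<Rightarrow> ('q,'a) rep" where
  "pull F M = (\<lambda>x. fst M (F x), \<lambda>x y. snd M (F x) (F y))"

text \<open>Split Grothendieck group = group completion of the monoid of iso classes under direct sum.\<close>
definition is_grel :: "'p set \<Rightarrow> ('p \<Rightarrow> 'p \<Rightarrow> bool) \<Rightarrow> ('p,'a::field) grel \<Rightarrow> bool" where
  "is_grel P ord x \<longleftrightarrow> is_rep P ord (fst x) \<and> is_rep P ord (snd x)"

definition gr_eq :: "'p set \<Rightarrow> ('p \<Rightarrow> 'p \<Rightarrow> bool) \<Rightarrow> ('p,'a::field) grel \<Rightarrow> ('p,'a) grel \<Rightarrow> bool" where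
  "gr_eq P ord x y \<longleftrightarrow> (\<exists>X. is_rep P ord X \<and>
      rep_iso P ord (dsum (dsum (fst x) (snd y)) X) (dsum (dsum (fst y) (snd x)) X))"

definition gr_of :: "('p,'a::field) rep \<Rightarrow> ('p,'a) grel" where
  "gr_of M = (M, zero_rep)"

definition gr_add :: "('p,'a::field) grel \<Rightarrow> ('p,'a) grel \<Rightarrow> ('p,'a) grel" where
  "gr_add x y = (dsum (fst x) (fst y), dsum (snd x) (snd y))"

definition gr_smul :: "int \<Rightarrow> ('p,'a::field) grel \<Rightarrow> ('p,'a) grel" where
  "gr_smul a x = (if a \<ge> 0 then (rep_pow (fst x) (nat a), rep_pow (snd x) (nat a))
                  else (rep_pow (snd x) (nat (-a)), rep_pow (fst x) (nat (-a))))"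

definition gr_pull :: "('q \<Rightarrow> 'p) \<Rightarrow> ('p,'a::field) grel \<Rightarrow> ('q,'a) grel" where
  "gr_pull F x = (pull F (fst x), pull F (snd x))"

definition poset_n :: "nat \<Rightarrow> nat set" where "poset_n n = {0..n}"

definition rel1 :: "nat \<Rightarrow> (nat \<times> nat) set" where
  "rel1 n = {(i,j). i < j \<and> j \<le> n}"

definition E_le :: "nat \<times> nat \<Rightarrow> nat \<times> nat \<Rightarrow> bool" where
  "E_le p q \<longleftrightarrow> fst p \<le> fst q \<and> snd p \<le> snd q"

definition G_le :: "nat \<times> nat \<Rightarrow> nat \<times> nat \<Rightarrow> bool" where
  "G_le p q \<longleftrightarrow> p = q \<or> snd p \<le> fst q"

definition d0 :: "nat \<times> nat \<Rightarrow> nat" where "d0 p = snd p"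
definition d1 :: "nat \<times> nat \<Rightarrow> nat" where "d1 p = fst p"

definition Gr_eq_n :: "nat \<Rightarrow> (nat,'a::field) grel \<Rightarrow> (nat,'a) grel \<Rightarrow> bool" where
  "Gr_eq_n n = gr_eq (poset_n n) (\<le>)"

definition E0 :: "nat \<Rightarrow> (nat,'a::field) grel set" where
  "E0 n = {x. is_grel (poset_n n) (\<le>) x \<and> gr_eq (rel1 n) E_le (gr_pull d0 x) (gr_pull d1 x)}"

definition G0 :: "nat \<Rightarrow> (nat,'a::field) grel set" where
  "G0 n = {x. is_grel (poset_n n) (\<le>) x \<and> gr_eq (rel1 n) G_le (gr_pull d0 x) (gr_pull d1 x)}"

definition J :: "nat \<Rightarrow> nat \<Rightarrow> (nat,'a::field) rep" where
  "J a b = (\<lambda>i. if a \<le> i \<and> i \<le> b then 1 else 0,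
            \<lambda>i j. if a \<le> i \<and> i \<le> j \<and> j \<le> b then 1\<^sub>m 1
                  else 0\<^sub>m (if a \<le> j \<and> j \<le> b then 1 else 0) (if a \<le> i \<and> i \<le> b then 1 else 0))"

definition S_rep :: "(nat,'a::field) rep" where
  "S_rep = (\<lambda>_. 1, \<lambda>i j. if i = j then 1\<^sub>m 1 else 0\<^sub>m 1 1)"

definition T_el :: "nat \<Rightarrow> (nat,'a::field) grel" where
  "T_el n = gr_add (gr_add (gr_of (J 0 (n - 1))) (gr_of (J 1 n))) (gr_smul (-1) (gr_of (J 1 (n - 1))))"

end

theory Submission
  imports Defs "HOL-Combinatorics.List_Permutation" "Jordan_Normal_Form.Gauss_Jordan_Elimination"
    "Jordan_Normal_Form.Determinant"
begin

section \<open>Inner rank of matrices\<close>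

lemma index_mult_mat_sum:
  assumes "A \<in> carrier_mat m k" "B \<in> carrier_mat k n" "i < m" "j < n"
  shows "(A * B) $$ (i,j) = (\<Sum>l<k. A $$ (i,l) * B $$ (l,j))"
  using assms by (auto simp: scalar_prod_def intro!: sum.cong)

lemma assoc_mult_mat_dims:
  assumes h1: "dim_col A = dim_row B" and h2: "dim_col B = dim_row C"
  shows "A * B * C = A * (B * C)"
proof -
  have a: "A \<in> carrier_mat (dim_row A) (dim_col A)" by (rule carrier_mat_triv)
  have b: "B \<in> carrier_mat (dim_col A) (dim_col B)" unfolding carrier_mat_def using h1 by simp
  have c: "C \<in> carrier_mat (dim_col B) (dim_col C)" unfolding carrier_mat_def using h2 by simp
  show ?thesis by (rule assoc_mult_mat[OF a b c])
qed

lemma sum_delta_mult_left: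
  "finite S \<Longrightarrow> (\<Sum>y\<in>S. (if x = y then 1 else 0) * (h y :: 'a::semiring_1)) = (if x \<in> S then h x else 0)"
  by (simp add: if_distrib[of "\<lambda>x. x * _"] cong: if_cong)

lemma sum_delta_mult_right:
  "finite S \<Longrightarrow> (\<Sum>y\<in>S. (h y :: 'a::semiring_1) * (if y = z then 1 else 0)) = (if z \<in> S then h z else 0)"
  by (simp add: if_distrib[of "\<lambda>x. _ * x"] cong: if_cong)

lemma identity_factor_dim_le:
  fixes E :: "'a::field mat"
  assumes E: "E \<in> carrier_mat r c" and F: "F \<in> carrier_mat c r" and EF: "E * F = 1\<^sub>m r"
  shows "r \<le> c"
proof (rule ccontr)
  assume "\<not> r \<le> c" hence cr: "c < r" by simp
  \<comment> \<open>pad E and F to square matrices: E' has a zero column, yet det E' * det F' = 1\<close>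
  define E' where "E' = mat r r (\<lambda>(i,j). if j < c then E $$ (i,j) else (0::'a))"
  define F' where "F' = mat r r (\<lambda>(i,j). if i < c then F $$ (i,j) else (0::'a))"
  have E'c: "E' \<in> carrier_mat r r" and F'c: "F' \<in> carrier_mat r r" by (auto simp: E'_def F'_def)
  have "E' * F' = 1\<^sub>m r"
  proof (rule eq_matI)
    fix i j assume i: "i < dim_row (1\<^sub>m r :: 'a mat)" and j: "j < dim_col (1\<^sub>m r :: 'a mat)"
    hence i: "i < r" and j: "j < r" by auto
    have "(E' * F') $$ (i,j) = (\<Sum>l<r. E' $$ (i,l) * F' $$ (l,j))"
      by (rule index_mult_mat_sum[OF E'c F'c i j])
    also have "\<dots> = (\<Sum>l<r. if l < c then E $$ (i,l) * F $$ (l,j) else 0)"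
      using i j by (intro sum.cong, auto simp: E'_def F'_def)
    also have "\<dots> = (\<Sum>l\<in>{..<r} \<inter> {l. l < c}. E $$ (i,l) * F $$ (l,j))"
      by (simp add: sum.inter_restrict)
    also have "{..<r} \<inter> {l. l < c} = {..<c}" using cr by auto
    also have "(\<Sum>l<c. E $$ (i,l) * F $$ (l,j)) = (E * F) $$ (i,j)"
      using cr i j by (subst index_mult_mat_sum[OF E F], auto)
    finally show "(E' * F') $$ (i,j) = 1\<^sub>m r $$ (i,j)" using EF by simp
  qed (auto simp: E'_def F'_def)
  hence "det (E' * F') = 1" by simp
  hence d1: "det E' * det F' = 1" using det_mult[OF E'c F'c] by simp
  have "det E' = 0"
  proof -
    let ?v = "unit_vec r (r - 1) :: 'a vec"
    have "?v \<in> carrier_vec r" by simp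
    moreover have "?v \<noteq> 0\<^sub>v r"
    proof
      assume "?v = 0\<^sub>v r"
      hence "?v $ (r - 1) = 0\<^sub>v r $ (r-1)" by simp
      thus False using cr by simp
    qed
    moreover have "E' *\<^sub>v ?v = 0\<^sub>v r"
    proof (rule eq_vecI)
      fix i assume "i < dim_vec (0\<^sub>v r :: 'a vec)"
      hence i: "i < r" by simp
      have "(E' *\<^sub>v ?v) $ i = row E' i \<bullet> ?v" using i E'c by simp
      also have "\<dots> = E' $$ (i, r - 1)"
        using i E'c cr by (subst scalar_prod_right_unit, auto)
      also have "\<dots> = 0" using i cr by (simp add: E'_def)
      finally show "(E' *\<^sub>v ?v) $ i = 0\<^sub>v r $ i" using i by simp
    qed (simp add: E'_def)
    ultimately show ?thesis using det_0_iff_vec_prod_zero_field[OF E'c] by blast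
  qed
  with d1 show False by simp
qed


text \<open>Over a field it is the usual rank; in this form its invariance under invertible base changes
  and its additivity on block-diagonal matrices are immediate.\<close>

definition mrank :: "'a::field mat \<Rightarrow> nat" where
  "mrank A = Max {r. \<exists>X Y. X \<in> carrier_mat r (dim_row A) \<and> Y \<in> carrier_mat (dim_col A) r \<and> X * A * Y = 1\<^sub>m r}"

lemma identity_factor_le_inner_dim:
  fixes A :: "'a::field mat"
  assumes "A = E * F" "E \<in> carrier_mat d c" "F \<in> carrier_mat c s"
    "X \<in> carrier_mat r d" "Y \<in> carrier_mat s r" "X * A * Y = 1\<^sub>m r"
  shows "r \<le> c"
proof -
  have "X * A * Y = (X * E) * (F * Y)" using assms(1) carrier_matD[OF assms(2)] carrier_matD[OF assms(3)]
      carrier_matD[OF assms(4)] carrier_matD[OF assms(5)] by (simp add: assoc_mult_mat_dims del: assoc_mult_mat)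
  hence "(X * E) * (F * Y) = 1\<^sub>m r" using assms(6) by simp
  moreover have "X * E \<in> carrier_mat r c" using assms(4,2) by (rule mult_carrier_mat)
  moreover have "F * Y \<in> carrier_mat c r" using assms(3,5) by (rule mult_carrier_mat)
  ultimately show ?thesis by (intro identity_factor_dim_le[of "X * E" r c "F * Y"])
qed

lemma mrank_candidates:
  fixes A :: "'a::field mat"
  assumes A: "A \<in> carrier_mat d s"
  shows "finite {r. \<exists>X Y. X \<in> carrier_mat r (dim_row A) \<and> Y \<in> carrier_mat (dim_col A) r \<and> X * A * Y = 1\<^sub>m r}"
    and "0 \<in> {r. \<exists>X Y. X \<in> carrier_mat r (dim_row A) \<and> Y \<in> carrier_mat (dim_col A) r \<and> X * A * Y = 1\<^sub>m r}"
proof -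
  have "{r. \<exists>X Y. X \<in> carrier_mat r (dim_row A) \<and> Y \<in> carrier_mat (dim_col A) r \<and> X * A * Y = 1\<^sub>m r} \<subseteq> {..s}"
  proof
    fix r assume "r \<in> {r. \<exists>X Y. X \<in> carrier_mat r (dim_row A) \<and> Y \<in> carrier_mat (dim_col A) r \<and> X * A * Y = 1\<^sub>m r}"
    then obtain X Y where "X \<in> carrier_mat r d" "Y \<in> carrier_mat s r" "X * A * Y = 1\<^sub>m r" using A by auto
    moreover have "A = A * 1\<^sub>m s" using A by simp
    ultimately have "r \<le> s" using A by (intro identity_factor_le_inner_dim[of A A "1\<^sub>m s" d s s X r Y]) auto
    thus "r \<in> {..s}" by simp
  qed
  thus "finite {r. \<exists>X Y. X \<in> carrier_mat r (dim_row A) \<and> Y \<in> carrier_mat (dim_col A) r \<and> X * A * Y = 1\<^sub>m r}"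
    using finite_subset by blast
  show "0 \<in> {r. \<exists>X Y. X \<in> carrier_mat r (dim_row A) \<and> Y \<in> carrier_mat (dim_col A) r \<and> X * A * Y = 1\<^sub>m r}"
    using A by (intro CollectI exI[of _ "0\<^sub>m 0 d"] exI[of _ "0\<^sub>m s 0"]) (auto intro!: eq_matI)
qed

lemma mrank_le:
  fixes A :: "'a::field mat"
  assumes "A = E * F" "E \<in> carrier_mat d c" "F \<in> carrier_mat c s"
  shows "mrank A \<le> c"
proof -
  have A: "A \<in> carrier_mat d s" using assms by auto
  show ?thesis unfolding mrank_def
  proof (rule Max.boundedI[OF mrank_candidates(1)[OF A]])
    show "{r. \<exists>X Y. X \<in> carrier_mat r (dim_row A) \<and> Y \<in> carrier_mat (dim_col A) r \<and> X * A * Y = 1\<^sub>m r} \<noteq> {}"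
      using mrank_candidates(2)[OF A] by blast
  next
    fix r assume "r \<in> {r. \<exists>X Y. X \<in> carrier_mat r (dim_row A) \<and> Y \<in> carrier_mat (dim_col A) r \<and> X * A * Y = 1\<^sub>m r}"
    then obtain X Y where "X \<in> carrier_mat r d" "Y \<in> carrier_mat s r" "X * A * Y = 1\<^sub>m r" using A by auto
    thus "r \<le> c" using assms by (intro identity_factor_le_inner_dim[of A E F d c s X r Y]) auto
  qed
qed

lemma mrank_ge:
  fixes A :: "'a::field mat"
  assumes A: "A \<in> carrier_mat d s" and "X \<in> carrier_mat r d" "Y \<in> carrier_mat s r" "X * A * Y = 1\<^sub>m r"
  shows "r \<le> mrank A"
  unfolding mrank_def apply (rule Max_ge[OF mrank_candidates(1)[OF A]]) using assms by (intro CollectI exI[of _ X] exI[of _ Y]) auto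

lemma mrank_identity_factor:
  fixes A :: "'a::field mat"
  assumes A: "A \<in> carrier_mat d s"
  shows "\<exists>X Y. X \<in> carrier_mat (mrank A) d \<and> Y \<in> carrier_mat s (mrank A) \<and> X * A * Y = 1\<^sub>m (mrank A)"
proof -
  have "mrank A \<in> {r. \<exists>X Y. X \<in> carrier_mat r (dim_row A) \<and> Y \<in> carrier_mat (dim_col A) r \<and> X * A * Y = 1\<^sub>m r}"
    unfolding mrank_def using mrank_candidates[OF A] by (intro Max_in) auto
  thus ?thesis using A by auto
qed

lemma mrank_mult_invertible_ge:
  fixes A :: "'a::field mat"
  assumes A: "A \<in> carrier_mat d s" and G: "G \<in> carrier_mat d' d" and Gi: "Gi \<in> carrier_mat d d'"
    and GiG: "Gi * G = 1\<^sub>m d" and U: "U \<in> carrier_mat s s'" and Ui: "Ui \<in> carrier_mat s' s"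
    and UUi: "U * Ui = 1\<^sub>m s"
  shows "mrank A \<le> mrank (G * A * U)"
proof -
  obtain X Y where X: "X \<in> carrier_mat (mrank A) d" and Y: "Y \<in> carrier_mat s (mrank A)"
    and XY: "X * A * Y = 1\<^sub>m (mrank A)" using mrank_identity_factor[OF A] by blast
  let ?r = "mrank A"
  have "(X * Gi) * (G * A * U) * (Ui * Y) = X * (Gi * G) * A * (U * Ui) * Y"
  proof -
    have "(X * Gi) * (G * A * U) * (Ui * Y) = X * (Gi * (G * (A * (U * (Ui * Y)))))"
      using carrier_matD[OF X] carrier_matD[OF Y] carrier_matD[OF A] carrier_matD[OF G] carrier_matD[OF Gi]
       carrier_matD[OF U] carrier_matD[OF Ui] by (simp add: assoc_mult_mat_dims del: assoc_mult_mat)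
    also have "\<dots> = X * (Gi * G) * A * (U * Ui) * Y"
      using carrier_matD[OF X] carrier_matD[OF Y] carrier_matD[OF A] carrier_matD[OF G] carrier_matD[OF Gi]
       carrier_matD[OF U] carrier_matD[OF Ui] by (simp add: assoc_mult_mat_dims del: assoc_mult_mat)
    finally show ?thesis .
  qed
  also have "\<dots> = 1\<^sub>m ?r" using GiG UUi XY X Y A by simp
  finally have "(X * Gi) * (G * A * U) * (Ui * Y) = 1\<^sub>m ?r" .
  thus ?thesis using X Y A G Gi U Ui by (intro mrank_ge[of _ d' s']) auto
qed

lemma mrank_mult_invertible:
  fixes A :: "'a::field mat"
  assumes A: "A \<in> carrier_mat d s" and G: "G \<in> carrier_mat d' d" and Gi: "Gi \<in> carrier_mat d d'"
    and GiG: "Gi * G = 1\<^sub>m d" and GGi: "G * Gi = 1\<^sub>m d'" and U: "U \<in> carrier_mat s s'" and Ui: "Ui \<in> carrier_mat s' s"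
    and UUi: "U * Ui = 1\<^sub>m s" and UiU: "Ui * U = 1\<^sub>m s'"
  shows "mrank (G * A * U) = mrank A"
proof (rule antisym)
  show "mrank A \<le> mrank (G * A * U)" by (rule mrank_mult_invertible_ge[OF A G Gi GiG U Ui UUi])
  have "Gi * (G * A * U) * Ui = (Gi * G) * A * (U * Ui)"
    using carrier_matD[OF A] carrier_matD[OF G] carrier_matD[OF Gi]
       carrier_matD[OF U] carrier_matD[OF Ui] by (simp add: assoc_mult_mat_dims del: assoc_mult_mat)
  also have "\<dots> = A" using GiG UUi A by simp
  finally have e: "Gi * (G * A * U) * Ui = A" .
  have "mrank (G * A * U) \<le> mrank (Gi * (G * A * U) * Ui)"
    using A G Gi U Ui GGi UiU by (intro mrank_mult_invertible_ge[of _ d' s']) auto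
  thus "mrank (G * A * U) \<le> mrank A" using e by simp
qed

definition canon :: "nat \<Rightarrow> nat \<Rightarrow> nat list \<Rightarrow> 'a::field mat" where
  "canon d s zs = mat d s (\<lambda>(i,q). if i < length zs \<and> zs ! i = q then 1 else 0)"

lemma canon_carrier[simp]: "canon d s zs \<in> carrier_mat d s" "dim_row (canon d s zs) = d" "dim_col (canon d s zs) = s"
  by (auto simp: canon_def)

lemma canon_factor:
  assumes "length zs \<le> d"
  shows "(canon d s zs :: 'a::field mat) = mat d (length zs) (\<lambda>(i,k). if i = k then 1 else 0) * mat (length zs) s (\<lambda>(k,q). if zs ! k = q then 1 else 0)"
proof (rule eq_matI)
  fix i j assume "i < dim_row (mat d (length zs) (\<lambda>(i,k). if i = k then 1 else 0) * mat (length zs) s (\<lambda>(k,q). if zs ! k = q then (1::'a) else 0))"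
    "j < dim_col (mat d (length zs) (\<lambda>(i,k). if i = k then 1 else 0) * mat (length zs) s (\<lambda>(k,q). if zs ! k = q then (1::'a) else 0))"
  hence i: "i < d" and j: "j < s" by auto
  show "canon d s zs $$ (i, j) = (mat d (length zs) (\<lambda>(i,k). if i = k then 1 else 0) * mat (length zs) s (\<lambda>(k,q). if zs ! k = q then 1 else 0)) $$ (i,j)"
    using i j by (subst index_mult_mat_sum[of _ d "length zs" _ s], auto simp: canon_def if_distrib[of "\<lambda>x. x * _"] cong: if_cong)
qed (auto simp: canon_def)

lemma mrank_canon:
  assumes d: "distinct zs" and s: "set zs \<subseteq> {..<s}" and l: "length zs \<le> d"
  shows "mrank (canon d s zs :: 'a::field mat) = length zs"
proof (rule antisym)
  show "mrank (canon d s zs :: 'a mat) \<le> length zs"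
    by (rule mrank_le[OF canon_factor[OF l]], auto)
  let ?t = "length zs"
  let ?X = "mat ?t d (\<lambda>(k,i). if k = i then 1 else 0) :: 'a mat"
  let ?Y = "mat s ?t (\<lambda>(q,k). if zs ! k = q then 1 else 0) :: 'a mat"
  let ?F = "mat ?t s (\<lambda>(k,q). if zs ! k = q then 1 else 0) :: 'a mat"
  have cc: "canon d s zs \<in> carrier_mat d s" by (simp add: canon_def)
  have XC: "?X * canon d s zs = ?F"
  proof (rule eq_matI)
    fix k q assume "k < dim_row ?F" "q < dim_col ?F"
    hence k: "k < ?t" and q: "q < s" by auto
    show "(?X * canon d s zs) $$ (k,q) = ?F $$ (k,q)"
      using k q l by (subst index_mult_mat_sum[OF _ cc], auto simp: canon_def if_distrib[of "\<lambda>x. x * _"] cong: if_cong)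
  qed auto
  have FY: "?F * ?Y = 1\<^sub>m ?t"
  proof (rule eq_matI)
    fix k k' assume "k < dim_row (1\<^sub>m ?t :: 'a mat)" "k' < dim_col (1\<^sub>m ?t :: 'a mat)"
    hence k: "k < ?t" and k': "k' < ?t" by auto
    have zk: "zs ! k < s" using s k nth_mem by blast
    have "(?F * ?Y) $$ (k,k') = (\<Sum>q<s. (if zs ! k = q then 1 else 0) * (if zs ! k' = q then 1 else 0))"
      using k k' by (subst index_mult_mat_sum[of _ _ s], auto)
    also have "\<dots> = (if zs ! k' = zs ! k then 1 else 0)" using zk by (simp add: sum_delta_mult_left)
    also have "\<dots> = 1\<^sub>m ?t $$ (k,k')" using k k' d by (simp add: nth_eq_iff_index_eq)
    finally show "(?F * ?Y) $$ (k,k') = 1\<^sub>m ?t $$ (k,k')" .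
  qed auto
  have "?X * canon d s zs * ?Y = 1\<^sub>m ?t" using XC FY by simp
  thus "length zs \<le> mrank (canon d s zs :: 'a mat)"
    by (intro mrank_ge[OF cc, of ?X _ ?Y]) auto
qed



definition pos :: "'b list \<Rightarrow> 'b \<Rightarrow> nat" where
  "pos xs x = (THE r. r < length xs \<and> xs ! r = x)"

lemma pos_nth: "distinct xs \<Longrightarrow> r < length xs \<Longrightarrow> pos xs (xs ! r) = r"
  unfolding pos_def by (rule the_equality) (auto simp: nth_eq_iff_index_eq)

lemma pos_in_set:
  assumes "distinct xs" "x \<in> set xs"
  shows "pos xs x < length xs" "xs ! pos xs x = x"
proof -
  obtain r where r: "r < length xs" "xs ! r = x" using assms(2) by (auto simp: in_set_conv_nth)
  hence "pos xs x = r" using pos_nth[OF assms(1) r(1)] by simp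
  thus "pos xs x < length xs" "xs ! pos xs x = x" using r by simp_all
qed

lemma pos_less:
  fixes xs :: "'b::linorder list"
  assumes s: "sorted_wrt (<) xs" and x: "x \<in> set xs" and y: "y \<in> set xs" and yx: "y < x"
  shows "pos xs y < pos xs x"
proof (rule ccontr)
  have d: "distinct xs" using s by (simp add: strict_sorted_iff)
  note px = pos_in_set[OF d x] and py = pos_in_set[OF d y]
  assume "\<not> pos xs y < pos xs x"
  hence "pos xs x = pos xs y \<or> pos xs x < pos xs y" by auto
  thus False
  proof
    assume "pos xs x = pos xs y"
    hence "x = y" using px(2) py(2) by metis
    thus False using yx by simp
  next
    assume "pos xs x < pos xs y"
    hence "xs ! pos xs x < xs ! pos xs y" by (rule sorted_wrt_nth_less[OF s _ py(1)])
    thus False using px(2) py(2) yx by simp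
  qed
qed

lemma reduced_row_echelon_pivots:
  fixes C :: "'a::field mat"
  assumes C: "C \<in> carrier_mat d s" and ref: "row_echelon_form C"
  obtains zs where "sorted_wrt (<) zs" "set zs \<subseteq> {..<s}" "length zs \<le> d"
    "\<And>r i. r < length zs \<Longrightarrow> i < d \<Longrightarrow> C $$ (i, zs ! r) = (if i = r then 1 else 0)"
    "\<And>r j. r < length zs \<Longrightarrow> j < zs ! r \<Longrightarrow> C $$ (r, j) = 0"
    "\<And>i j. length zs \<le> i \<Longrightarrow> i < d \<Longrightarrow> j < s \<Longrightarrow> C $$ (i, j) = 0"
proof -
  from ref obtain f where "pivot_fun C f s" unfolding row_echelon_form_def using C by auto
  note pv = pivot_funD[OF carrier_matD(1)[OF C] this]
  define t where "t = length (takeWhile (\<lambda>i. f i < s) [0..<d])"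
  have td: "t \<le> d" unfolding t_def using length_takeWhile_le[of _ "[0..<d]"] by simp
  have below: "f i < s" if "i < t" for i
  proof -
    have "takeWhile (\<lambda>i. f i < s) [0..<d] ! i \<in> set (takeWhile (\<lambda>i. f i < s) [0..<d])"
      using that unfolding t_def by (rule nth_mem)
    moreover have "takeWhile (\<lambda>i. f i < s) [0..<d] ! i = i"
      using that td unfolding t_def by (simp add: takeWhile_nth)
    ultimately show ?thesis by (auto dest: set_takeWhileD)
  qed
  have at_t: "f t = s" if "t < d"
  proof -
    have "\<not> f ([0..<d] ! t) < s" unfolding t_def by (rule nth_length_takeWhile) (use that in \<open>simp add: t_def\<close>)
    thus ?thesis using pv(1)[OF that] that by simp
  qed
  have beyond: "f i = s" if "t \<le> i" "i < d" for i
    using that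
  proof (induct i)
    case (Suc i)
    show ?case
    proof (cases "t \<le> i")
      case True
      thus ?thesis using Suc pv(3)[of i] pv(1)[of "Suc i"] by auto
    next
      case False
      thus ?thesis using Suc at_t by (simp add: le_Suc_eq)
    qed
  qed (use at_t in simp)
  have mono: "f i < f j" if "i < j" "j < t" for i j
    using that
  proof (induct j)
    case (Suc j)
    have "f j < f (Suc j)" using pv(3)[of j] below[of "Suc j"] Suc td by auto
    thus ?case using Suc by (cases "i = j") auto
  qed simp
  show ?thesis
  proof (rule that[of "map f [0..<t]"])
    show "sorted_wrt (<) (map f [0..<t])" unfolding sorted_wrt_map
      by (rule sorted_wrt_mono_rel[OF _ sorted_wrt_upt]) (auto intro: mono)
    show "set (map f [0..<t]) \<subseteq> {..<s}" using below by auto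
    show "length (map f [0..<t]) \<le> d" using td by simp
    show "C $$ (i, map f [0..<t] ! r) = (if i = r then 1 else 0)" if "r < length (map f [0..<t])" "i < d" for r i
      using pv(4)[of r] pv(5)[of r i] below[of r] td that by auto
    show "C $$ (r, j) = 0" if "r < length (map f [0..<t])" "j < map f [0..<t] ! r" for r j
      using pv(2)[of r j] td that by auto
    show "C $$ (i, j) = 0" if "length (map f [0..<t]) \<le> i" "i < d" "j < s" for i j
      using pv(2)[of i j] beyond[of i] that by auto
  qed
qed

text \<open>The column operations clear every non-pivot column using the pivot columns to its left, so
  they are upper triangular.\<close>

lemma pivot_column_reduction:
  fixes C :: "'a::field mat"
  assumes C: "C \<in> carrier_mat d s" and sorted: "sorted_wrt (<) zs" and zs: "set zs \<subseteq> {..<s}"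
    and pivot: "\<And>r i. r < length zs \<Longrightarrow> i < d \<Longrightarrow> C $$ (i, zs ! r) = (if i = r then 1 else 0)"
    and left: "\<And>r j. r < length zs \<Longrightarrow> j < zs ! r \<Longrightarrow> C $$ (r, j) = 0"
    and zero: "\<And>i j. length zs \<le> i \<Longrightarrow> i < d \<Longrightarrow> j < s \<Longrightarrow> C $$ (i, j) = 0"
  obtains U Ui where "U \<in> carrier_mat s s" "Ui \<in> carrier_mat s s" "U * Ui = 1\<^sub>m s" "Ui * U = 1\<^sub>m s"
    "upper_triangular U" "upper_triangular Ui" "C * U = canon d s zs"
proof -
  have dist: "distinct zs" using sorted by (simp add: strict_sorted_iff)
  define N where "N p q = (if p \<in> set zs \<and> q \<notin> set zs then C $$ (pos zs p, q) else 0)" for p q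
  define U where "U = mat s s (\<lambda>(p,q). (if p = q then 1 else 0) - N p q)"
  define Ui where "Ui = mat s s (\<lambda>(p,q). (if p = q then 1 else 0) + N p q)"
  have Uc: "U \<in> carrier_mat s s" and Uic: "Ui \<in> carrier_mat s s" by (auto simp: U_def Ui_def)
  have N_lower: "N p q = 0" if "q < p" for p q
    using that left[of "pos zs p" q] pos_in_set[OF dist, of p] by (auto simp: N_def)
  have N_square: "N p k * N k q = 0" for p k q by (simp add: N_def)
  have "U * Ui = 1\<^sub>m s"
  proof (rule eq_matI)
    fix p q assume "p < dim_row (1\<^sub>m s :: 'a mat)" "q < dim_col (1\<^sub>m s :: 'a mat)"
    hence p: "p < s" and q: "q < s" by auto
    have "(U * Ui) $$ (p,q) = (\<Sum>k<s. ((if p = k then 1 else 0) - N p k) * ((if k = q then 1 else 0) + N k q))"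
      using p q by (subst index_mult_mat_sum[OF Uc Uic]) (auto simp: U_def Ui_def)
    also have "\<dots> = (\<Sum>k<s. (if p = k then 1 else 0) * ((if k = q then 1 else 0) + N k q))
       - (\<Sum>k<s. N p k * (if k = q then 1 else 0)) - (\<Sum>k<s. N p k * N k q)"
      by (simp add: sum_subtractf[symmetric] algebra_simps)
    also have "\<dots> = 1\<^sub>m s $$ (p,q)"
      using p q by (simp only: sum_delta_mult_left[OF finite_lessThan] sum_delta_mult_right[OF finite_lessThan]
          N_square sum.neutral_const) simp
    finally show "(U * Ui) $$ (p,q) = 1\<^sub>m s $$ (p,q)" .
  qed (auto simp: U_def Ui_def)
  moreover have "Ui * U = 1\<^sub>m s"
  proof (rule eq_matI)
    fix p q assume "p < dim_row (1\<^sub>m s :: 'a mat)" "q < dim_col (1\<^sub>m s :: 'a mat)"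
    hence p: "p < s" and q: "q < s" by auto
    have "(Ui * U) $$ (p,q) = (\<Sum>k<s. ((if p = k then 1 else 0) + N p k) * ((if k = q then 1 else 0) - N k q))"
      using p q by (subst index_mult_mat_sum[OF Uic Uc]) (auto simp: U_def Ui_def)
    also have "\<dots> = (\<Sum>k<s. (if p = k then 1 else 0) * ((if k = q then 1 else 0) - N k q))
       + (\<Sum>k<s. N p k * (if k = q then 1 else 0)) - (\<Sum>k<s. N p k * N k q)"
      by (simp add: sum_subtractf[symmetric] sum.distrib[symmetric] algebra_simps)
    also have "\<dots> = 1\<^sub>m s $$ (p,q)"
      using p q by (simp only: sum_delta_mult_left[OF finite_lessThan] sum_delta_mult_right[OF finite_lessThan]
          N_square sum.neutral_const) simp
    finally show "(Ui * U) $$ (p,q) = 1\<^sub>m s $$ (p,q)" .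
  qed (auto simp: U_def Ui_def)
  moreover have "upper_triangular U" "upper_triangular Ui"
    using N_lower by (auto simp: upper_triangular_def U_def Ui_def)
  moreover have "C * U = canon d s zs"
  proof (rule eq_matI)
    fix i q assume "i < dim_row (canon d s zs :: 'a mat)" "q < dim_col (canon d s zs :: 'a mat)"
    hence i: "i < d" and q: "q < s" by auto
    have CN: "(\<Sum>k<s. C $$ (i,k) * N k q) = (if q \<in> set zs then 0 else C $$ (i,q))"
    proof (cases "q \<in> set zs")
      case True thus ?thesis by (simp add: N_def)
    next
      case False
      have "(\<Sum>k<s. C $$ (i,k) * N k q) = (\<Sum>k\<in>set zs. C $$ (i,k) * N k q)"
        using zs by (intro sum.mono_neutral_right) (auto simp: N_def)
      also have "\<dots> = (\<Sum>r<length zs. C $$ (i, zs ! r) * N (zs ! r) q)"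
        by (rule sum.reindex_bij_betw[OF bij_betw_nth[OF dist refl refl], symmetric])
      also have "\<dots> = (\<Sum>r<length zs. (if i = r then 1 else 0) * C $$ (r, q))"
        using i False by (intro sum.cong) (auto simp: pivot N_def pos_nth[OF dist])
      also have "\<dots> = C $$ (i,q)"
        using zero[OF _ i q] by (auto simp: sum_delta_mult_left)
      finally show ?thesis using False by simp
    qed
    have "(C * U) $$ (i,q) = (\<Sum>k<s. C $$ (i,k) * ((if k = q then 1 else 0) - N k q))"
      using i q by (subst index_mult_mat_sum[OF C Uc]) (auto simp: U_def)
    also have "\<dots> = (\<Sum>k<s. C $$ (i,k) * (if k = q then 1 else 0)) - (\<Sum>k<s. C $$ (i,k) * N k q)"
      by (simp add: sum_subtractf[symmetric] algebra_simps)
    also have "\<dots> = (if q \<in> set zs then C $$ (i,q) else 0)"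
      using i q by (simp only: sum_delta_mult_right[OF finite_lessThan] CN) simp
    also have "\<dots> = canon d s zs $$ (i,q)"
    proof (cases "q \<in> set zs")
      case True
      hence r: "pos zs q < length zs" "zs ! pos zs q = q" using pos_in_set[OF dist] by auto
      hence "(i < length zs \<and> zs ! i = q) = (i = pos zs q)" using nth_eq_iff_index_eq[OF dist] by metis
      thus ?thesis using True r i q pivot[OF r(1) i] by (simp add: canon_def)
    next
      case False
      hence "\<not> (i < length zs \<and> zs ! i = q)" using nth_mem by auto
      thus ?thesis using False i q by (simp add: canon_def)
    qed
    finally show "(C * U) $$ (i,q) = canon d s zs $$ (i,q)" .
  qed (use C Uc in auto)
  ultimately show ?thesis by (rule that[OF Uc Uic])
qed

lemma canonical_form:
  fixes A :: "'a::field mat"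
  assumes A: "A \<in> carrier_mat d s"
  obtains G Gi U Ui zs where "G \<in> carrier_mat d d" "Gi \<in> carrier_mat d d" "G * Gi = 1\<^sub>m d" "Gi * G = 1\<^sub>m d"
    "U \<in> carrier_mat s s" "Ui \<in> carrier_mat s s" "U * Ui = 1\<^sub>m s" "Ui * U = 1\<^sub>m s"
    "upper_triangular U" "upper_triangular Ui"
    "sorted_wrt (<) zs" "set zs \<subseteq> {..<s}" "length zs \<le> d" "G * A * U = canon d s zs"
proof -
  note gj = gauss_jordan_single[OF A refl]
  from gj(4) obtain G Gi where CGA: "gauss_jordan_single A = G * A" and G: "G \<in> carrier_mat d d"
    "Gi \<in> carrier_mat d d" "G * Gi = 1\<^sub>m d" "Gi * G = 1\<^sub>m d" by blast
  show ?thesis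
  proof (rule reduced_row_echelon_pivots[OF gj(2,3)])
    fix zs assume zs: "sorted_wrt (<) zs" "set zs \<subseteq> {..<s}" "length zs \<le> d"
      and pivots: "\<And>r i. r < length zs \<Longrightarrow> i < d \<Longrightarrow> gauss_jordan_single A $$ (i, zs ! r) = (if i = r then 1 else 0)"
        "\<And>r j. r < length zs \<Longrightarrow> j < zs ! r \<Longrightarrow> gauss_jordan_single A $$ (r, j) = 0"
        "\<And>i j. length zs \<le> i \<Longrightarrow> i < d \<Longrightarrow> j < s \<Longrightarrow> gauss_jordan_single A $$ (i, j) = 0"
    show ?thesis
    proof (rule pivot_column_reduction[OF gj(2) zs(1,2) pivots])
      fix U Ui assume U: "U \<in> carrier_mat s s" "Ui \<in> carrier_mat s s" "U * Ui = 1\<^sub>m s" "Ui * U = 1\<^sub>m s"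
        "upper_triangular U" "upper_triangular Ui" and red: "gauss_jordan_single A * U = canon d s zs"
      show ?thesis using red unfolding CGA by (rule that[OF G U zs])
    qed
  qed
qed

lemma mrank_factor:
  fixes A :: "'a::field mat"
  assumes A: "A \<in> carrier_mat d s"
  obtains E F where "E \<in> carrier_mat d (mrank A)" "F \<in> carrier_mat (mrank A) s" "A = E * F"
proof -
  obtain G Gi U Ui zs where G: "G \<in> carrier_mat d d" "Gi \<in> carrier_mat d d" "G * Gi = 1\<^sub>m d" "Gi * G = 1\<^sub>m d"
    and U: "U \<in> carrier_mat s s" "Ui \<in> carrier_mat s s" "U * Ui = 1\<^sub>m s" "Ui * U = 1\<^sub>m s"
      "upper_triangular U" "upper_triangular Ui"
    and zs: "sorted_wrt (<) zs" "set zs \<subseteq> {..<s}" "length zs \<le> d" and red: "G * A * U = canon d s zs"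
    by (rule canonical_form[OF A])
  have "mrank A = mrank (G * A * U)"
    by (rule mrank_mult_invertible[OF A G(1,2,4,3) U(1-4), symmetric])
  also have "\<dots> = length zs"
    unfolding red using zs by (intro mrank_canon) (simp_all add: strict_sorted_iff)
  finally have "mrank A = length zs" .
  define E0 where "E0 = (mat d (length zs) (\<lambda>(i,k). if i = k then 1 else 0) :: 'a mat)"
  define F0 where "F0 = (mat (length zs) s (\<lambda>(k,q). if zs ! k = q then 1 else 0) :: 'a mat)"
  have E0F0: "E0 \<in> carrier_mat d (length zs)" "F0 \<in> carrier_mat (length zs) s" by (auto simp: E0_def F0_def)
  note c = A G(1,2) U(1,2) E0F0
  note dims = c[THEN carrier_matD(1)] c[THEN carrier_matD(2)]
  have "Gi * (G * A * U) * Ui = (Gi * G) * A * (U * Ui)"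
    using dims by (simp add: assoc_mult_mat_dims del: assoc_mult_mat)
  hence "A = Gi * (G * A * U) * Ui" using G(4) U(3) A by simp
  also have "\<dots> = (Gi * E0) * (F0 * Ui)"
    unfolding red canon_factor[OF zs(3)] E0_def[symmetric] F0_def[symmetric]
    using dims by (simp add: assoc_mult_mat_dims del: assoc_mult_mat)
  finally have A_factor: "A = Gi * E0 * (F0 * Ui)" .
  show ?thesis by (rule that[OF _ _ A_factor]) (use \<open>mrank A = length zs\<close> G U E0F0 in auto)
qed



lemma mrank_four_block_diag:
  fixes A B :: "'a::field mat"
  assumes A: "A \<in> carrier_mat a1 a2" and B: "B \<in> carrier_mat b1 b2"
  shows "mrank (four_block_mat A (0\<^sub>m a1 b2) (0\<^sub>m b1 a2) B) = mrank A + mrank B"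
proof (rule antisym)
  obtain EA FA where EA: "EA \<in> carrier_mat a1 (mrank A)" and FA: "FA \<in> carrier_mat (mrank A) a2" and eA: "A = EA * FA"
    using mrank_factor[OF A] by blast
  obtain EB FB where EB: "EB \<in> carrier_mat b1 (mrank B)" and FB: "FB \<in> carrier_mat (mrank B) b2" and eB: "B = EB * FB"
    using mrank_factor[OF B] by blast
  have "four_block_mat A (0\<^sub>m a1 b2) (0\<^sub>m b1 a2) B =
    four_block_mat EA (0\<^sub>m a1 (mrank B)) (0\<^sub>m b1 (mrank A)) EB * four_block_mat FA (0\<^sub>m (mrank A) b2) (0\<^sub>m (mrank B) a2) FB"
    by (subst mult_four_block_mat[of _ a1 "mrank A" _ "mrank B" _ b1 _ _ a2 _ b2]) (use EA FA EB FB eA eB in auto)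
  thus "mrank (four_block_mat A (0\<^sub>m a1 b2) (0\<^sub>m b1 a2) B) \<le> mrank A + mrank B"
    by (rule mrank_le[of _ _ _ "a1 + b1" _ "a2 + b2"]) (use EA FB EB FA in auto)
next
  obtain XA YA where XA: "XA \<in> carrier_mat (mrank A) a1" and YA: "YA \<in> carrier_mat a2 (mrank A)" and xa: "XA * A * YA = 1\<^sub>m (mrank A)"
    using mrank_identity_factor[OF A] by blast
  obtain XB YB where XB: "XB \<in> carrier_mat (mrank B) b1" and YB: "YB \<in> carrier_mat b2 (mrank B)" and xb: "XB * B * YB = 1\<^sub>m (mrank B)"
    using mrank_identity_factor[OF B] by blast
  let ?X = "four_block_mat XA (0\<^sub>m (mrank A) b1) (0\<^sub>m (mrank B) a1) XB"
  let ?Y = "four_block_mat YA (0\<^sub>m a2 (mrank B)) (0\<^sub>m b2 (mrank A)) YB"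
  let ?D = "four_block_mat A (0\<^sub>m a1 b2) (0\<^sub>m b1 a2) B"
  have "?X * ?D = four_block_mat (XA * A) (0\<^sub>m (mrank A) b2) (0\<^sub>m (mrank B) a2) (XB * B)"
    by (subst mult_four_block_mat[of _ "mrank A" a1 _ b1 _ "mrank B" _ _ a2 _ b2]) (use XA XB A B in auto)
  moreover have "four_block_mat (XA * A) (0\<^sub>m (mrank A) b2) (0\<^sub>m (mrank B) a2) (XB * B) * ?Y = four_block_mat (XA * A * YA) (0\<^sub>m (mrank A) (mrank B)) (0\<^sub>m (mrank B) (mrank A)) (XB * B * YB)"
    by (subst mult_four_block_mat[of _ "mrank A" a2 _ b2 _ "mrank B" _ _ "mrank A" _ "mrank B"]) (use XA XB A B YA YB in auto)
  ultimately have "?X * ?D * ?Y = four_block_mat (XA * A * YA) (0\<^sub>m (mrank A) (mrank B)) (0\<^sub>m (mrank B) (mrank A)) (XB * B * YB)"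
    by simp
  hence "?X * ?D * ?Y = 1\<^sub>m (mrank A + mrank B)" using xa xb by simp
  thus "mrank A + mrank B \<le> mrank ?D"
    by (intro mrank_ge[of _ "a1 + b1" "a2 + b2" ?X _ ?Y]) (use XA XB A B YA YB in auto)
qed

lemma mrank_one: "mrank (1\<^sub>m d :: 'a::field mat) = d"
proof (rule antisym)
  show "mrank (1\<^sub>m d :: 'a mat) \<le> d" by (rule mrank_le[of _ "1\<^sub>m d" "1\<^sub>m d" d d d]) auto
  show "d \<le> mrank (1\<^sub>m d :: 'a mat)" by (rule mrank_ge[of _ d d "1\<^sub>m d" _ "1\<^sub>m d"]) auto
qed

lemma mrank_zero: "mrank (0\<^sub>m r c :: 'a::field mat) = 0"
proof -
  have "mrank (0\<^sub>m r c :: 'a mat) \<le> 0" by (rule mrank_le[of _ "0\<^sub>m r 0" "0\<^sub>m 0 c" r 0 c]) auto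
  thus ?thesis by simp
qed

section \<open>Representations, isomorphisms and direct sums\<close>

lemma is_repD:
  assumes "is_rep P ord M" "x \<in> P" "y \<in> P"
  shows "ord x y \<Longrightarrow> snd M x y \<in> carrier_mat (fst M y) (fst M x)"
    and "snd M x x = 1\<^sub>m (fst M x)"
    and "z \<in> P \<Longrightarrow> ord x y \<Longrightarrow> ord y z \<Longrightarrow> snd M x z = snd M y z * snd M x y"
  using assms unfolding is_rep_def by blast+

lemma fst_zero_rep [simp]: "fst (zero_rep :: ('p,'a::field) rep) x = 0"
  and snd_zero_rep [simp]: "snd (zero_rep :: ('p,'a::field) rep) x y = 0\<^sub>m 0 0"
  by (simp_all add: zero_rep_def)

lemma fst_dsum: "fst (dsum M N) x = fst M x + fst N x"
  and snd_dsum: "snd (dsum M N) x y =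
    four_block_mat (snd M x y) (0\<^sub>m (fst M y) (fst N x)) (0\<^sub>m (fst N y) (fst M x)) (snd N x y)"
  by (simp_all add: dsum_def)

lemma is_rep_zero: "is_rep P ord (zero_rep :: ('p,'a::field) rep)"
  unfolding is_rep_def by (auto intro!: eq_matI)

lemma is_rep_dsum:
  assumes M: "is_rep P ord M" and N: "is_rep P ord N"
  shows "is_rep P ord (dsum M N)"
  unfolding is_rep_def
proof (intro conjI ballI impI)
  fix x y assume x: "x \<in> P" and y: "y \<in> P" and o: "ord x y"
  show "snd (dsum M N) x y \<in> carrier_mat (fst (dsum M N) y) (fst (dsum M N) x)"
    unfolding snd_dsum fst_dsum using is_repD(1)[OF M x y o] is_repD(1)[OF N x y o] by simp
next
  fix x assume x: "x \<in> P"
  show "snd (dsum M N) x x = 1\<^sub>m (fst (dsum M N) x)"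
    unfolding snd_dsum fst_dsum using is_repD(2)[OF M x x] is_repD(2)[OF N x x] by simp
next
  fix x y z assume x: "x \<in> P" and y: "y \<in> P" and z: "z \<in> P" and o1: "ord x y" and o2: "ord y z"
  note c = is_repD(1)[OF M x y o1] is_repD(1)[OF N x y o1] is_repD(1)[OF M y z o2] is_repD(1)[OF N y z o2]
  show "snd (dsum M N) x z = snd (dsum M N) y z * snd (dsum M N) x y"
    unfolding snd_dsum
    by (subst mult_four_block_mat[of _ "fst M z" "fst M y" _ "fst N y" _ "fst N z" _ _ "fst M x" _ "fst N x"])
       (use c is_repD(3)[OF M x y z o1 o2] is_repD(3)[OF N x y z o1 o2] in auto)
qed

lemma is_rep_pow: "is_rep P ord M \<Longrightarrow> is_rep P ord (rep_pow M k)"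
  by (induct k) (auto simp: is_rep_zero is_rep_dsum)

lemma is_rep_pull:
  assumes "is_rep P ord M" and "\<And>x. x \<in> Q \<Longrightarrow> F x \<in> P"
    and "\<And>x y. x \<in> Q \<Longrightarrow> y \<in> Q \<Longrightarrow> ord' x y \<Longrightarrow> ord (F x) (F y)"
  shows "is_rep Q ord' (pull F M)"
  using assms unfolding is_rep_def pull_def by simp

lemma is_rep_mono:
  assumes "is_rep P ord M" and "Q \<subseteq> P" and "\<And>x y. x \<in> Q \<Longrightarrow> y \<in> Q \<Longrightarrow> ord' x y \<Longrightarrow> ord x y"
  shows "is_rep Q ord' M"
  using assms unfolding is_rep_def by blast

lemma pull_dsum: "pull F (dsum M N) = dsum (pull F M) (pull F N)"
  by (simp add: pull_def dsum_def)

lemma pull_zero: "pull F zero_rep = zero_rep"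
  by (simp add: pull_def zero_rep_def)

lemma pull_pow: "pull F (rep_pow M k) = rep_pow (pull F M) k"
  by (induct k) (simp_all add: pull_dsum pull_zero)

definition rep_agree :: "'p set \<Rightarrow> ('p \<Rightarrow> 'p \<Rightarrow> bool) \<Rightarrow> ('p,'a::field) rep \<Rightarrow> ('p,'a) rep \<Rightarrow> bool" where
  "rep_agree P ord M N \<longleftrightarrow>
     (\<forall>x\<in>P. fst M x = fst N x) \<and> (\<forall>x\<in>P. \<forall>y\<in>P. ord x y \<longrightarrow> snd M x y = snd N x y)"

lemma rep_agree_refl: "rep_agree P ord M M"
  by (simp add: rep_agree_def)

lemma rep_agree_dsum: "rep_agree P ord M M' \<Longrightarrow> rep_agree P ord N N' \<Longrightarrow> rep_agree P ord (dsum M N) (dsum M' N')"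
  unfolding rep_agree_def by (simp add: snd_dsum fst_dsum)

definition rep_iso_by :: "'p set \<Rightarrow> ('p \<Rightarrow> 'p \<Rightarrow> bool) \<Rightarrow> ('p,'a::field) rep \<Rightarrow> ('p,'a) rep \<Rightarrow>
    ('p \<Rightarrow> 'a mat) \<Rightarrow> ('p \<Rightarrow> 'a mat) \<Rightarrow> bool" where
  "rep_iso_by P ord M N \<phi> \<psi> \<longleftrightarrow>
     (\<forall>x\<in>P. \<phi> x \<in> carrier_mat (fst N x) (fst M x) \<and> \<psi> x \<in> carrier_mat (fst M x) (fst N x) \<and>
            \<phi> x * \<psi> x = 1\<^sub>m (fst N x) \<and> \<psi> x * \<phi> x = 1\<^sub>m (fst M x)) \<and>
     (\<forall>x\<in>P. \<forall>y\<in>P. ord x y \<longrightarrow> snd N x y * \<phi> x = \<phi> y * snd M x y)"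

lemma rep_iso_iff_by: "rep_iso P ord M N \<longleftrightarrow> (\<exists>\<phi> \<psi>. rep_iso_by P ord M N \<phi> \<psi>)"
  unfolding rep_iso_def rep_iso_by_def ..

lemma rep_iso_byI:
  assumes "\<And>x. x \<in> P \<Longrightarrow> \<phi> x \<in> carrier_mat (fst N x) (fst M x)"
    "\<And>x. x \<in> P \<Longrightarrow> \<psi> x \<in> carrier_mat (fst M x) (fst N x)"
    "\<And>x. x \<in> P \<Longrightarrow> \<phi> x * \<psi> x = 1\<^sub>m (fst N x)"
    "\<And>x. x \<in> P \<Longrightarrow> \<psi> x * \<phi> x = 1\<^sub>m (fst M x)"
    "\<And>x y. x \<in> P \<Longrightarrow> y \<in> P \<Longrightarrow> ord x y \<Longrightarrow> snd N x y * \<phi> x = \<phi> y * snd M x y"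
  shows "rep_iso_by P ord M N \<phi> \<psi>"
  unfolding rep_iso_by_def using assms by blast

lemma rep_iso_byD:
  assumes "rep_iso_by P ord M N \<phi> \<psi>"
  shows "x \<in> P \<Longrightarrow> \<phi> x \<in> carrier_mat (fst N x) (fst M x)"
    "x \<in> P \<Longrightarrow> \<psi> x \<in> carrier_mat (fst M x) (fst N x)"
    "x \<in> P \<Longrightarrow> \<phi> x * \<psi> x = 1\<^sub>m (fst N x)"
    "x \<in> P \<Longrightarrow> \<psi> x * \<phi> x = 1\<^sub>m (fst M x)"
    "x \<in> P \<Longrightarrow> y \<in> P \<Longrightarrow> ord x y \<Longrightarrow> snd N x y * \<phi> x = \<phi> y * snd M x y"
  using assms unfolding rep_iso_by_def by blast+

lemma rep_iso_by_agree:
  assumes "rep_iso_by P ord M N \<phi> \<psi>" and "rep_agree P ord N N'"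
  shows "rep_iso_by P ord M N' \<phi> \<psi>"
  using assms unfolding rep_iso_by_def rep_agree_def by simp

lemma rep_iso_by_refl:
  assumes "is_rep P ord M"
  shows "rep_iso_by P ord M M (\<lambda>x. 1\<^sub>m (fst M x)) (\<lambda>x. 1\<^sub>m (fst M x))"
  using assms by (intro rep_iso_byI) (auto dest: is_repD(1))

lemma rep_iso_by_mono:
  assumes "rep_iso_by P ord M N \<phi> \<psi>" and "Q \<subseteq> P"
    and "\<And>x y. x \<in> Q \<Longrightarrow> y \<in> Q \<Longrightarrow> ord' x y \<Longrightarrow> ord x y"
  shows "rep_iso_by Q ord' M N \<phi> \<psi>"
  using assms unfolding rep_iso_by_def by blast

lemma rep_iso_by_sym:
  assumes iso: "rep_iso_by P ord M N \<phi> \<psi>" and M: "is_rep P ord M" and N: "is_rep P ord N"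
  shows "rep_iso_by P ord N M \<psi> \<phi>"
proof (rule rep_iso_byI)
  fix x y assume x: "x \<in> P" and y: "y \<in> P" and o: "ord x y"
  note c = rep_iso_byD(1,2)[OF iso x] rep_iso_byD(1,2)[OF iso y] is_repD(1)[OF M x y o] is_repD(1)[OF N x y o]
  note dims = c[THEN carrier_matD(1)] c[THEN carrier_matD(2)]
  have "snd M x y * \<psi> x = (\<psi> y * \<phi> y) * snd M x y * \<psi> x" using rep_iso_byD(4)[OF iso y] c by simp
  also have "\<dots> = \<psi> y * (snd N x y * \<phi> x) * \<psi> x"
    unfolding rep_iso_byD(5)[OF iso x y o] using dims by (simp add: assoc_mult_mat_dims del: assoc_mult_mat)
  also have "\<dots> = \<psi> y * snd N x y * (\<phi> x * \<psi> x)" using dims by (simp add: assoc_mult_mat_dims del: assoc_mult_mat)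
  also have "\<dots> = \<psi> y * snd N x y" using rep_iso_byD(3)[OF iso x] c by simp
  finally show "snd M x y * \<psi> x = \<psi> y * snd N x y" .
qed (use rep_iso_byD[OF iso] in auto)

lemma rep_iso_by_trans:
  assumes i1: "rep_iso_by P ord M N \<phi> \<psi>" and i2: "rep_iso_by P ord N K \<phi>' \<psi>'"
    and M: "is_rep P ord M" and N: "is_rep P ord N" and K: "is_rep P ord K"
  shows "rep_iso_by P ord M K (\<lambda>x. \<phi>' x * \<phi> x) (\<lambda>x. \<psi> x * \<psi>' x)"
proof (rule rep_iso_byI)
  fix x assume x: "x \<in> P"
  note c = rep_iso_byD(1,2)[OF i1 x] rep_iso_byD(1,2)[OF i2 x]
  note dims = c[THEN carrier_matD(1)] c[THEN carrier_matD(2)]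
  have "\<phi>' x * \<phi> x * (\<psi> x * \<psi>' x) = \<phi>' x * (\<phi> x * \<psi> x) * \<psi>' x"
    using dims by (simp add: assoc_mult_mat_dims del: assoc_mult_mat)
  thus "\<phi>' x * \<phi> x * (\<psi> x * \<psi>' x) = 1\<^sub>m (fst K x)"
    using rep_iso_byD(3)[OF i1 x] rep_iso_byD(3)[OF i2 x] c by simp
  have "\<psi> x * \<psi>' x * (\<phi>' x * \<phi> x) = \<psi> x * (\<psi>' x * \<phi>' x) * \<phi> x"
    using dims by (simp add: assoc_mult_mat_dims del: assoc_mult_mat)
  thus "\<psi> x * \<psi>' x * (\<phi>' x * \<phi> x) = 1\<^sub>m (fst M x)"
    using rep_iso_byD(4)[OF i1 x] rep_iso_byD(4)[OF i2 x] c by simp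
  show "\<phi>' x * \<phi> x \<in> carrier_mat (fst K x) (fst M x)" "\<psi> x * \<psi>' x \<in> carrier_mat (fst M x) (fst K x)"
    using c by auto
next
  fix x y assume x: "x \<in> P" and y: "y \<in> P" and o: "ord x y"
  note c = rep_iso_byD(1)[OF i1 x] rep_iso_byD(1)[OF i1 y] rep_iso_byD(1)[OF i2 x] rep_iso_byD(1)[OF i2 y]
    is_repD(1)[OF M x y o] is_repD(1)[OF N x y o] is_repD(1)[OF K x y o]
  note dims = c[THEN carrier_matD(1)] c[THEN carrier_matD(2)]
  have "snd K x y * (\<phi>' x * \<phi> x) = (snd K x y * \<phi>' x) * \<phi> x"
    using dims by (simp add: assoc_mult_mat_dims del: assoc_mult_mat)
  also have "\<dots> = \<phi>' y * (snd N x y * \<phi> x)"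
    unfolding rep_iso_byD(5)[OF i2 x y o] using dims by (simp add: assoc_mult_mat_dims del: assoc_mult_mat)
  also have "\<dots> = \<phi>' y * \<phi> y * snd M x y"
    unfolding rep_iso_byD(5)[OF i1 x y o] using dims by (simp add: assoc_mult_mat_dims del: assoc_mult_mat)
  finally show "snd K x y * (\<phi>' x * \<phi> x) = \<phi>' y * \<phi> y * snd M x y" .
qed

lemma rep_iso_by_dsum:
  assumes i1: "rep_iso_by P ord M M' \<phi> \<psi>" and i2: "rep_iso_by P ord N N' \<phi>' \<psi>'"
    and M: "is_rep P ord M" and M': "is_rep P ord M'" and N: "is_rep P ord N" and N': "is_rep P ord N'"
  shows "rep_iso_by P ord (dsum M N) (dsum M' N')
    (\<lambda>x. four_block_mat (\<phi> x) (0\<^sub>m (fst M' x) (fst N x)) (0\<^sub>m (fst N' x) (fst M x)) (\<phi>' x))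
    (\<lambda>x. four_block_mat (\<psi> x) (0\<^sub>m (fst M x) (fst N' x)) (0\<^sub>m (fst N x) (fst M' x)) (\<psi>' x))"
proof (rule rep_iso_byI)
  fix x assume x: "x \<in> P"
  note c = rep_iso_byD(1,2)[OF i1 x] rep_iso_byD(1,2)[OF i2 x]
  show "four_block_mat (\<phi> x) (0\<^sub>m (fst M' x) (fst N x)) (0\<^sub>m (fst N' x) (fst M x)) (\<phi>' x)
      \<in> carrier_mat (fst (dsum M' N') x) (fst (dsum M N) x)"
    "four_block_mat (\<psi> x) (0\<^sub>m (fst M x) (fst N' x)) (0\<^sub>m (fst N x) (fst M' x)) (\<psi>' x)
      \<in> carrier_mat (fst (dsum M N) x) (fst (dsum M' N') x)"
    using c by (simp_all add: fst_dsum)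
  show "four_block_mat (\<phi> x) (0\<^sub>m (fst M' x) (fst N x)) (0\<^sub>m (fst N' x) (fst M x)) (\<phi>' x) *
      four_block_mat (\<psi> x) (0\<^sub>m (fst M x) (fst N' x)) (0\<^sub>m (fst N x) (fst M' x)) (\<psi>' x) = 1\<^sub>m (fst (dsum M' N') x)"
    by (subst mult_four_block_mat[of _ "fst M' x" "fst M x" _ "fst N x" _ "fst N' x" _ _ "fst M' x" _ "fst N' x"])
       (use c rep_iso_byD(3)[OF i1 x] rep_iso_byD(3)[OF i2 x] in \<open>auto simp: fst_dsum\<close>)
  show "four_block_mat (\<psi> x) (0\<^sub>m (fst M x) (fst N' x)) (0\<^sub>m (fst N x) (fst M' x)) (\<psi>' x) *
      four_block_mat (\<phi> x) (0\<^sub>m (fst M' x) (fst N x)) (0\<^sub>m (fst N' x) (fst M x)) (\<phi>' x) = 1\<^sub>m (fst (dsum M N) x)"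
    by (subst mult_four_block_mat[of _ "fst M x" "fst M' x" _ "fst N' x" _ "fst N x" _ _ "fst M x" _ "fst N x"])
       (use c rep_iso_byD(4)[OF i1 x] rep_iso_byD(4)[OF i2 x] in \<open>auto simp: fst_dsum\<close>)
next
  fix x y assume x: "x \<in> P" and y: "y \<in> P" and o: "ord x y"
  note c = rep_iso_byD(1)[OF i1 x] rep_iso_byD(1)[OF i2 x] rep_iso_byD(1)[OF i1 y] rep_iso_byD(1)[OF i2 y]
    is_repD(1)[OF M x y o] is_repD(1)[OF M' x y o] is_repD(1)[OF N x y o] is_repD(1)[OF N' x y o]
  have "snd (dsum M' N') x y * four_block_mat (\<phi> x) (0\<^sub>m (fst M' x) (fst N x)) (0\<^sub>m (fst N' x) (fst M x)) (\<phi>' x)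
      = four_block_mat (snd M' x y * \<phi> x) (0\<^sub>m (fst M' y) (fst N x)) (0\<^sub>m (fst N' y) (fst M x)) (snd N' x y * \<phi>' x)"
    unfolding snd_dsum
    by (subst mult_four_block_mat[of _ "fst M' y" "fst M' x" _ "fst N' x" _ "fst N' y" _ _ "fst M x" _ "fst N x"])
       (use c in auto)
  also have "\<dots> = four_block_mat (\<phi> y * snd M x y) (0\<^sub>m (fst M' y) (fst N x)) (0\<^sub>m (fst N' y) (fst M x)) (\<phi>' y * snd N x y)"
    unfolding rep_iso_byD(5)[OF i1 x y o] rep_iso_byD(5)[OF i2 x y o] ..
  also have "\<dots> = four_block_mat (\<phi> y) (0\<^sub>m (fst M' y) (fst N y)) (0\<^sub>m (fst N' y) (fst M y)) (\<phi>' y) * snd (dsum M N) x y"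
    unfolding snd_dsum
    by (subst mult_four_block_mat[of _ "fst M' y" "fst M y" _ "fst N y" _ "fst N' y" _ _ "fst M x" _ "fst N x"])
       (use c in auto)
  finally show "snd (dsum M' N') x y * four_block_mat (\<phi> x) (0\<^sub>m (fst M' x) (fst N x)) (0\<^sub>m (fst N' x) (fst M x)) (\<phi>' x)
      = four_block_mat (\<phi> y) (0\<^sub>m (fst M' y) (fst N y)) (0\<^sub>m (fst N' y) (fst M y)) (\<phi>' y) * snd (dsum M N) x y" .
qed

lemma rep_iso_refl: "is_rep P ord M \<Longrightarrow> rep_iso P ord M M"
  unfolding rep_iso_iff_by by (blast intro: rep_iso_by_refl)

lemma rep_iso_of_agree: "is_rep P ord M \<Longrightarrow> rep_agree P ord M N \<Longrightarrow> rep_iso P ord M N"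
  unfolding rep_iso_iff_by by (blast intro: rep_iso_by_agree rep_iso_by_refl)

lemma rep_iso_sym: "rep_iso P ord M N \<Longrightarrow> is_rep P ord M \<Longrightarrow> is_rep P ord N \<Longrightarrow> rep_iso P ord N M"
  unfolding rep_iso_iff_by by (blast intro: rep_iso_by_sym)

lemma rep_iso_trans:
  "rep_iso P ord M N \<Longrightarrow> rep_iso P ord N K \<Longrightarrow> is_rep P ord M \<Longrightarrow> is_rep P ord N \<Longrightarrow> is_rep P ord K
    \<Longrightarrow> rep_iso P ord M K"
  unfolding rep_iso_iff_by by (blast intro: rep_iso_by_trans)

lemma rep_iso_mono:
  "rep_iso P ord M N \<Longrightarrow> Q \<subseteq> P \<Longrightarrow> (\<And>x y. x \<in> Q \<Longrightarrow> y \<in> Q \<Longrightarrow> ord' x y \<Longrightarrow> ord x y)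
    \<Longrightarrow> rep_iso Q ord' M N"
  unfolding rep_iso_iff_by by (blast intro: rep_iso_by_mono)

lemma rep_iso_dsum:
  "rep_iso P ord M M' \<Longrightarrow> rep_iso P ord N N' \<Longrightarrow> is_rep P ord M \<Longrightarrow> is_rep P ord M' \<Longrightarrow>
    is_rep P ord N \<Longrightarrow> is_rep P ord N' \<Longrightarrow> rep_iso P ord (dsum M N) (dsum M' N')"
  unfolding rep_iso_iff_by by (blast intro: rep_iso_by_dsum)

definition swap_mat :: "nat \<Rightarrow> nat \<Rightarrow> 'a::field mat" where
  "swap_mat m n = four_block_mat (0\<^sub>m n m) (1\<^sub>m n) (1\<^sub>m m) (0\<^sub>m m n)"

lemma swap_mat_carrier: "swap_mat m n \<in> carrier_mat (m + n) (m + n)" "swap_mat m n \<in> carrier_mat (n + m) (n + m)"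
  unfolding carrier_mat_def swap_mat_def by simp_all

lemma swap_mat_inverse: "swap_mat m n * swap_mat n m = (1\<^sub>m (n + m) :: 'a::field mat)"
  unfolding swap_mat_def by (subst mult_four_block_mat[of _ n m _ n _ m _ _ n _ m]) auto

lemma dsum_comm:
  assumes M: "is_rep P ord M" and N: "is_rep P ord N"
  shows "rep_iso P ord (dsum M N) (dsum N M)"
  unfolding rep_iso_iff_by
proof (rule exI[of _ "\<lambda>x. swap_mat (fst M x) (fst N x)"], rule exI[of _ "\<lambda>x. swap_mat (fst N x) (fst M x)"],
    rule rep_iso_byI)
  fix x y assume x: "x \<in> P" and y: "y \<in> P" and o: "ord x y"
  note c = is_repD(1)[OF M x y o] is_repD(1)[OF N x y o]
  have "snd (dsum N M) x y * swap_mat (fst M x) (fst N x) =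
      four_block_mat (0\<^sub>m (fst N y) (fst M x)) (snd N x y) (snd M x y) (0\<^sub>m (fst M y) (fst N x))"
    unfolding snd_dsum swap_mat_def
    by (subst mult_four_block_mat[of _ "fst N y" "fst N x" _ "fst M x" _ "fst M y" _ _ "fst M x" _ "fst N x"])
       (use c in auto)
  also have "\<dots> = swap_mat (fst M y) (fst N y) * snd (dsum M N) x y"
    unfolding snd_dsum swap_mat_def
    by (subst mult_four_block_mat[of _ "fst N y" "fst M y" _ "fst N y" _ "fst M y" _ _ "fst M x" _ "fst N x"])
       (use c in auto)
  finally show "snd (dsum N M) x y * swap_mat (fst M x) (fst N x) = swap_mat (fst M y) (fst N y) * snd (dsum M N) x y" .
qed (auto simp: fst_dsum swap_mat_carrier swap_mat_inverse add.commute)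

lemma dsum_assoc:
  assumes M: "is_rep P ord M" and N: "is_rep P ord N" and K: "is_rep P ord K"
  shows "rep_iso P ord (dsum (dsum M N) K) (dsum M (dsum N K))"
proof (rule rep_iso_of_agree)
  show "is_rep P ord (dsum (dsum M N) K)" by (intro is_rep_dsum M N K)
  have "snd (dsum (dsum M N) K) x y = snd (dsum M (dsum N K)) x y" if x: "x \<in> P" and y: "y \<in> P" and o: "ord x y" for x y
  proof -
    note c = is_repD(1)[OF M x y o] is_repD(1)[OF N x y o] is_repD(1)[OF K x y o]
    show ?thesis unfolding snd_dsum fst_dsum by (rule eq_matI) (use c in auto)
  qed
  thus "rep_agree P ord (dsum (dsum M N) K) (dsum M (dsum N K))" by (simp add: rep_agree_def fst_dsum)
qed

lemma dsum_zero_right: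
  assumes M: "is_rep P ord M"
  shows "rep_iso P ord (dsum M zero_rep) M"
proof (rule rep_iso_of_agree)
  show "is_rep P ord (dsum M zero_rep)" by (intro is_rep_dsum M is_rep_zero)
  have "snd (dsum M zero_rep) x y = snd (M) x y" if x: "x \<in> P" and y: "y \<in> P" and o: "ord x y" for x y
  proof -
    note c = is_repD(1)[OF M x y o]
    show ?thesis unfolding snd_dsum fst_dsum by (rule eq_matI) (use c in auto)
  qed
  thus "rep_agree P ord (dsum M zero_rep) (M)" by (simp add: rep_agree_def fst_dsum)
qed

lemma dsum_zero_left:
  assumes M: "is_rep P ord M"
  shows "rep_iso P ord (dsum zero_rep M) M"
proof (rule rep_iso_of_agree)
  show "is_rep P ord (dsum zero_rep M)" by (intro is_rep_dsum M is_rep_zero)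
  have "snd (dsum zero_rep M) x y = snd (M) x y" if x: "x \<in> P" and y: "y \<in> P" and o: "ord x y" for x y
  proof -
    note c = is_repD(1)[OF M x y o]
    show ?thesis unfolding snd_dsum fst_dsum by (rule eq_matI) (use c in auto)
  qed
  thus "rep_agree P ord (dsum zero_rep M) (M)" by (simp add: rep_agree_def fst_dsum)
qed

lemma dsum_interchange:
  assumes A: "is_rep P ord A" and B: "is_rep P ord B" and C: "is_rep P ord C" and D: "is_rep P ord D"
  shows "rep_iso P ord (dsum (dsum A B) (dsum C D)) (dsum (dsum A C) (dsum B D))"
proof -
  note r = is_rep_dsum A B C D
  have i1: "rep_iso P ord (dsum (dsum A B) (dsum C D)) (dsum A (dsum B (dsum C D)))"
    by (rule dsum_assoc) (intro r is_rep_dsum)+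
  have i2: "rep_iso P ord (dsum B (dsum C D)) (dsum (dsum B C) D)"
    by (rule rep_iso_sym[OF dsum_assoc]) (intro r is_rep_dsum)+
  have i3: "rep_iso P ord (dsum (dsum B C) D) (dsum (dsum C B) D)"
    by (rule rep_iso_dsum[OF dsum_comm rep_iso_refl]) (intro r is_rep_dsum)+
  have i4: "rep_iso P ord (dsum (dsum C B) D) (dsum C (dsum B D))"
    by (rule dsum_assoc) (intro r is_rep_dsum)+
  have i5: "rep_iso P ord (dsum A (dsum C (dsum B D))) (dsum (dsum A C) (dsum B D))"
    by (rule rep_iso_sym[OF dsum_assoc]) (intro r is_rep_dsum)+
  have i234: "rep_iso P ord (dsum B (dsum C D)) (dsum C (dsum B D))"
    by (rule rep_iso_trans[OF rep_iso_trans[OF i2 i3] i4]) (intro r is_rep_dsum)+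
  have "rep_iso P ord (dsum A (dsum B (dsum C D))) (dsum A (dsum C (dsum B D)))"
    by (rule rep_iso_dsum[OF rep_iso_refl i234]) (intro r is_rep_dsum)+
  thus ?thesis by (rule rep_iso_trans[OF i1 rep_iso_trans[OF _ i5]]) (intro r is_rep_dsum)+
qed

section \<open>The rank invariant\<close>

definition rk :: "('p,'a::field) rep \<Rightarrow> 'p \<Rightarrow> 'p \<Rightarrow> nat" where
  "rk M x y = mrank (snd M x y)"

lemma rk_iso:
  assumes iso: "rep_iso P ord M N" and M: "is_rep P ord M" and N: "is_rep P ord N"
    and x: "x \<in> P" and y: "y \<in> P" and o: "ord x y"
  shows "rk M x y = rk N x y"
proof -
  obtain \<phi> \<psi> where i: "rep_iso_by P ord M N \<phi> \<psi>" using iso unfolding rep_iso_iff_by by blast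
  note c = rep_iso_byD(1,2)[OF i x] rep_iso_byD(1,2)[OF i y] is_repD(1)[OF M x y o] is_repD(1)[OF N x y o]
  have "snd N x y = snd N x y * (\<phi> x * \<psi> x)" using rep_iso_byD(3)[OF i x] c by simp
  also have "\<dots> = \<phi> y * snd M x y * \<psi> x"
    unfolding rep_iso_byD(5)[OF i x y o, symmetric] using c
    by (simp add: assoc_mult_mat_dims carrier_matD del: assoc_mult_mat)
  finally have e: "snd N x y = \<phi> y * snd M x y * \<psi> x" .
  show ?thesis
    unfolding rk_def e by (rule mrank_mult_invertible[symmetric, OF c(5) c(3) c(4) rep_iso_byD(4,3)[OF i y]
        c(2) c(1) rep_iso_byD(4,3)[OF i x]])
qed

lemma rk_dsum:
  assumes "is_rep P ord M" "is_rep P ord N" "x \<in> P" "y \<in> P" "ord x y"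
  shows "rk (dsum M N) x y = rk M x y + rk N x y"
  unfolding rk_def snd_dsum by (rule mrank_four_block_diag[OF assms(1,2)[THEN is_repD(1), OF assms(3-5)]])

lemma rk_zero [simp]: "rk (zero_rep :: ('p,'a::field) rep) x y = 0"
  unfolding rk_def by (simp add: mrank_zero)

lemma rk_pow:
  assumes "is_rep P ord M" "x \<in> P" "y \<in> P" "ord x y"
  shows "rk (rep_pow M k) x y = k * rk M x y"
  by (induct k) (simp_all add: rk_dsum[OF assms(1) is_rep_pow[OF assms(1)] assms(2-4)])

lemma rk_pull: "rk (pull F M) x y = rk M (F x) (F y)"
  by (simp add: rk_def pull_def)

section \<open>Interval decomposition over a finite linear order\<close>

definition lmat :: "'b list \<Rightarrow> 'c list \<Rightarrow> ('b \<Rightarrow> 'c \<Rightarrow> 'a) \<Rightarrow> 'a::field mat" where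
  "lmat xs ys g = mat (length xs) (length ys) (\<lambda>(p,q). g (xs ! p) (ys ! q))"

lemma lmat_carrier [simp]: "lmat xs ys g \<in> carrier_mat (length xs) (length ys)"
  "dim_row (lmat xs ys g) = length xs" "dim_col (lmat xs ys g) = length ys"
  by (auto simp: lmat_def)

lemma lmat_index [simp]: "p < length xs \<Longrightarrow> q < length ys \<Longrightarrow> lmat xs ys g $$ (p,q) = g (xs ! p) (ys ! q)"
  by (simp add: lmat_def)

lemma lmat_mult:
  assumes "distinct ys"
  shows "lmat xs ys g * lmat ys zs h = lmat xs zs (\<lambda>x z. \<Sum>y\<in>set ys. g x y * h y z)"
proof (rule eq_matI)
  fix p q assume "p < dim_row (lmat xs zs (\<lambda>x z. \<Sum>y\<in>set ys. g x y * h y z))"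
    "q < dim_col (lmat xs zs (\<lambda>x z. \<Sum>y\<in>set ys. g x y * h y z))"
  hence p: "p < length xs" and q: "q < length zs" by auto
  have "(lmat xs ys g * lmat ys zs h) $$ (p,q) = (\<Sum>l<length ys. g (xs ! p) (ys ! l) * h (ys ! l) (zs ! q))"
    using p q by (subst index_mult_mat_sum[of _ _ "length ys"]) auto
  also have "\<dots> = (\<Sum>y\<in>set ys. g (xs ! p) y * h y (zs ! q))"
    by (rule sum.reindex_bij_betw[OF bij_betw_nth[OF assms refl refl]])
  finally show "(lmat xs ys g * lmat ys zs h) $$ (p,q) = lmat xs zs (\<lambda>x z. \<Sum>y\<in>set ys. g x y * h y z) $$ (p,q)"
    using p q by simp
qed auto

lemma lmat_cong: "(\<And>x y. x \<in> set xs \<Longrightarrow> y \<in> set ys \<Longrightarrow> g x y = h x y) \<Longrightarrow> lmat xs ys g = lmat xs ys h"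
  by (rule eq_matI) auto

lemma lmat_delta_one: "distinct xs \<Longrightarrow> lmat xs xs (\<lambda>x y. if x = y then 1 else 0) = 1\<^sub>m (length xs)"
  by (rule eq_matI) (auto simp: nth_eq_iff_index_eq)

lemma mrank_lmat_delta:
  assumes dx: "distinct xs" and dy: "distinct ys"
  shows "mrank (lmat xs ys (\<lambda>x y. if x = y then 1 else 0) :: 'a::field mat) = card (set xs \<inter> set ys)"
proof -
  define zs where "zs = filter (\<lambda>x. x \<in> set ys) xs"
  have dz: "distinct zs" using dx by (simp add: zs_def)
  have sz: "set zs = set xs \<inter> set ys" by (auto simp: zs_def)
  let ?D = "\<lambda>x y. if x = y then (1::'a) else 0"
  have f: "lmat xs ys ?D = lmat xs zs ?D * lmat zs ys ?D"
    unfolding lmat_mult[OF dz] by (rule lmat_cong) (auto simp: sum_delta_mult_left sz)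
  have "lmat zs xs ?D * lmat xs ys ?D = lmat zs ys ?D"
    unfolding lmat_mult[OF dx] by (rule lmat_cong) (auto simp: sum_delta_mult_left sz)
  moreover have "lmat zs ys ?D * lmat ys zs ?D = lmat zs zs ?D"
    unfolding lmat_mult[OF dy] by (rule lmat_cong) (auto simp: sum_delta_mult_left sz)
  ultimately have "lmat zs xs ?D * lmat xs ys ?D * lmat ys zs ?D = 1\<^sub>m (length zs)"
    using lmat_delta_one[OF dz] by simp
  hence "length zs \<le> mrank (lmat xs ys ?D)"
    by (intro mrank_ge[of _ "length xs" "length ys" "lmat zs xs ?D" _ "lmat ys zs ?D"]) auto
  moreover have "mrank (lmat xs ys ?D) \<le> length zs" by (rule mrank_le[OF f]) auto
  ultimately show ?thesis using distinct_card[OF dz] sz by simp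
qed

text \<open>A bar is a pair (birth, death). The representation of a list of bars is the direct sum of
  the interval modules of its bars; the space at i has the bars alive at i as its basis, listed
  by their index in the list.\<close>

definition alive :: "(nat \<times> nat) list \<Rightarrow> nat \<Rightarrow> nat \<Rightarrow> bool" where
  "alive L i p \<longleftrightarrow> fst (L ! p) \<le> i \<and> i \<le> snd (L ! p)"

definition bars_at :: "(nat \<times> nat) list \<Rightarrow> nat \<Rightarrow> nat list" where
  "bars_at L i = filter (alive L i) [0..<length L]"

definition bar_rep :: "(nat \<times> nat) list \<Rightarrow> (nat, 'a::field) rep" where
  "bar_rep L = (\<lambda>i. length (bars_at L i), \<lambda>i j. lmat (bars_at L j) (bars_at L i) (\<lambda>x y. if x = y then 1 else 0))"

definition bar_count :: "(nat \<times> nat) list \<Rightarrow> nat \<Rightarrow> nat \<Rightarrow> nat" where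
  "bar_count L i j = length (filter (\<lambda>x. fst x \<le> i \<and> j \<le> snd x) L)"

text \<open>Bars are sorted by birth, so that a bar with a smaller index is never younger.\<close>

definition barcode :: "(nat \<times> nat) list \<Rightarrow> nat \<Rightarrow> bool" where
  "barcode L n \<longleftrightarrow> (\<forall>x\<in>set L. fst x \<le> snd x \<and> snd x \<le> n) \<and> sorted (map fst L)"

lemma bars_at_distinct [simp]: "distinct (bars_at L i)"
  by (simp add: bars_at_def)

lemma bars_at_sorted: "sorted_wrt (<) (bars_at L i)"
  unfolding bars_at_def by (rule sorted_wrt_filter) simp

lemma mem_bars_at: "p \<in> set (bars_at L i) \<longleftrightarrow> p < length L \<and> alive L i p"
  by (auto simp: bars_at_def)

lemma fst_bar_rep: "fst (bar_rep L) i = length (bars_at L i)"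
  and snd_bar_rep: "snd (bar_rep L) i j = lmat (bars_at L j) (bars_at L i) (\<lambda>x y. if x = y then 1 else 0)"
  by (simp_all add: bar_rep_def)

lemma is_rep_bar_rep: "is_rep (P :: nat set) (\<le>) (bar_rep L :: (nat,'a::field) rep)"
  unfolding is_rep_def
proof (intro conjI ballI impI)
  fix i j k :: nat assume ij: "i \<le> j" and jk: "j \<le> k"
  show "snd (bar_rep L) i k = snd (bar_rep L) j k * (snd (bar_rep L) i j :: 'a mat)"
    unfolding snd_bar_rep lmat_mult[OF bars_at_distinct]
    by (rule lmat_cong) (use ij jk in \<open>auto simp: sum_delta_mult_left mem_bars_at alive_def\<close>)
qed (auto simp: fst_bar_rep snd_bar_rep lmat_delta_one)

lemma rk_bar_rep:
  assumes "i \<le> j"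
  shows "rk (bar_rep L :: (nat,'a::field) rep) i j = bar_count L i j"
proof -
  have "rk (bar_rep L :: (nat,'a) rep) i j = card (set (bars_at L j) \<inter> set (bars_at L i))"
    unfolding rk_def snd_bar_rep by (rule mrank_lmat_delta) simp_all
  also have "set (bars_at L j) \<inter> set (bars_at L i) = {p. p < length L \<and> fst (L ! p) \<le> i \<and> j \<le> snd (L ! p)}"
    using assms by (auto simp: mem_bars_at alive_def)
  also have "card \<dots> = bar_count L i j"
    unfolding bar_count_def by (rule length_filter_conv_card[symmetric])
  finally show ?thesis .
qed

lemma bar_rep_perm_iso:
  assumes m: "mset L = mset L'"
  shows "rep_iso (P :: nat set) (\<le>) (bar_rep L :: (nat,'a::field) rep) (bar_rep L')"
proof -
  obtain p where p: "p permutes {..<length L'}" and pl: "permute_list p L' = L"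
    using mset_eq_permutation[OF m] by blast
  have len: "length L = length L'" using pl by auto
  let ?n = "length L"
  have Lp: "L ! y = L' ! p y" if "y < ?n" for y using permute_list_nth[OF p, of y] pl len that by simp
  have pin: "p y < ?n \<longleftrightarrow> y < ?n" for y using permutes_in_image[OF p, of y] len by simp
  have pinj: "p y = p y' \<longleftrightarrow> y = y'" for y y' using permutes_inj[OF p] by (auto dest: injD)
  have al: "alive L' i (p y) \<longleftrightarrow> alive L i y" if "y < ?n" for i y using Lp[OF that] by (simp add: alive_def)
  have surj: "\<exists>y. y < ?n \<and> x = p y" if "x < ?n" for x
  proof -
    have "p ` {..<length L'} = {..<length L'}" using permutes_imp_bij[OF p] by (simp add: bij_betw_def)
    thus ?thesis using that len by (metis imageE lessThan_iff)
  qed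
  define \<phi> where "\<phi> i = lmat (bars_at L' i) (bars_at L i) (\<lambda>x y. if x = p y then (1::'a) else 0)" for i
  define \<psi> where "\<psi> i = lmat (bars_at L i) (bars_at L' i) (\<lambda>y x. if x = p y then (1::'a) else 0)" for i
  have "rep_iso_by P (\<le>) (bar_rep L) (bar_rep L') \<phi> \<psi>"
  proof (rule rep_iso_byI)
    fix i assume "i \<in> P"
    show "\<phi> i \<in> carrier_mat (fst (bar_rep L') i) (fst (bar_rep L) i)" by (simp add: \<phi>_def fst_bar_rep)
    show "\<psi> i \<in> carrier_mat (fst (bar_rep L) i) (fst (bar_rep L') i)" by (simp add: \<psi>_def fst_bar_rep)
    show "\<phi> i * \<psi> i = 1\<^sub>m (fst (bar_rep L') i)"
      unfolding \<phi>_def \<psi>_def lmat_mult[OF bars_at_distinct] fst_bar_rep lmat_delta_one[OF bars_at_distinct, symmetric]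
    proof (rule lmat_cong)
      fix x x' assume x: "x \<in> set (bars_at L' i)" and x': "x' \<in> set (bars_at L' i)"
      then obtain y where y: "y < ?n" "x = p y" using surj len by (auto simp: mem_bars_at)
      have yi: "y \<in> set (bars_at L i)" using x y al by (auto simp: mem_bars_at)
      have "(\<Sum>z\<in>set (bars_at L i). (if x = p z then 1 else 0) * (if x' = p z then 1 else 0)) =
            (\<Sum>z\<in>set (bars_at L i). (if y = z then 1 else 0) * (if x' = p z then (1::'a) else 0))"
        using y pinj by (intro sum.cong) auto
      also have "\<dots> = (if x = x' then 1 else 0)" using yi y by (simp add: sum_delta_mult_left)
      finally show "(\<Sum>z\<in>set (bars_at L i). (if x = p z then 1 else 0) * (if x' = p z then 1 else 0)) = (if x = x' then 1 else (0::'a))" .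
    qed
    show "\<psi> i * \<phi> i = 1\<^sub>m (fst (bar_rep L) i)"
      unfolding \<phi>_def \<psi>_def lmat_mult[OF bars_at_distinct] fst_bar_rep lmat_delta_one[OF bars_at_distinct, symmetric]
    proof (rule lmat_cong)
      fix y y' assume y: "y \<in> set (bars_at L i)" and y': "y' \<in> set (bars_at L i)"
      have pyi: "p y \<in> set (bars_at L' i)" using y al pin len by (auto simp: mem_bars_at)
      have "(\<Sum>x\<in>set (bars_at L' i). (if x = p y then 1 else 0) * (if x = p y' then 1 else 0)) =
            (\<Sum>x\<in>set (bars_at L' i). (if p y = x then 1 else 0) * (if x = p y' then (1::'a) else 0))"
        by (intro sum.cong) auto
      also have "\<dots> = (if y = y' then 1 else 0)" using pyi pinj by (simp add: sum_delta_mult_left)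
      finally show "(\<Sum>x\<in>set (bars_at L' i). (if x = p y then 1 else 0) * (if x = p y' then 1 else 0)) = (if y = y' then 1 else (0::'a))" .
    qed
  next
    fix i j :: nat assume ij: "i \<le> j"
    show "snd (bar_rep L') i j * \<phi> i = \<phi> j * snd (bar_rep L) i j"
      unfolding \<phi>_def snd_bar_rep lmat_mult[OF bars_at_distinct]
    proof (rule lmat_cong)
      fix x y assume x: "x \<in> set (bars_at L' j)" and y: "y \<in> set (bars_at L i)"
      have l: "(\<Sum>z\<in>set (bars_at L' i). (if x = z then 1 else 0) * (if z = p y then 1 else 0)) = (if x \<in> set (bars_at L' i) then (if x = p y then 1 else (0::'a)) else 0)"
        by (simp add: sum_delta_mult_left)
      have r: "(\<Sum>z\<in>set (bars_at L j). (if x = p z then 1 else 0) * (if z = y then 1 else 0)) = (if y \<in> set (bars_at L j) then (if x = p y then 1 else (0::'a)) else 0)"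
        by (simp add: sum_delta_mult_right)
      have "x = p y \<Longrightarrow> x \<in> set (bars_at L' i) \<and> y \<in> set (bars_at L j)"
        using x y al pin len by (auto simp: mem_bars_at)
      thus "(\<Sum>z\<in>set (bars_at L' i). (if x = z then 1 else 0) * (if z = p y then 1 else 0)) =
            (\<Sum>z\<in>set (bars_at L j). (if x = p z then 1 else 0) * (if z = y then 1 else (0::'a)))"
        unfolding l r by auto
    qed
  qed
  thus ?thesis unfolding rep_iso_iff_by by blast
qed

text \<open>Inclusion-exclusion recovers the multiplicity of each bar from the counts of bars
  containing a given interval.\<close>

lemma count_bar_inclusion_exclusion:
  fixes a b :: nat
  shows "int (length (filter ((=) (a,b)) L)) =
     int (length (filter (\<lambda>x. fst x \<le> a \<and> b \<le> snd x) L)) - int (length (filter (\<lambda>x. fst x < a \<and> b \<le> snd x) L))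
   - int (length (filter (\<lambda>x. fst x \<le> a \<and> b < snd x) L)) + int (length (filter (\<lambda>x. fst x < a \<and> b < snd x) L))"
proof (induct L)
  case (Cons x L)
  have e: "int (length (filter P (x # L))) = (if P x then 1 else 0) + int (length (filter P L))" for P
    by simp
  have "(if (a,b) = x then 1 else 0::int) = (if fst x \<le> a \<and> b \<le> snd x then 1 else 0)
     - (if fst x < a \<and> b \<le> snd x then 1 else 0) - (if fst x \<le> a \<and> b < snd x then 1 else 0)
     + (if fst x < a \<and> b < snd x then 1 else 0)"
    by (cases x) auto
  thus ?case unfolding e using Cons by linarith
qed simp

lemma mset_eq_of_bar_count:
  assumes L: "barcode L n" and L': "barcode L' n"
    and count: "\<And>i j. i \<le> j \<Longrightarrow> j \<le> n \<Longrightarrow> bar_count L i j = bar_count L' i j"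
  shows "mset L = mset L'"
proof (rule multiset_eqI)
  fix x :: "nat \<times> nat"
  obtain a b where x: "x = (a,b)" by (cases x)
  show "count (mset L) x = count (mset L') x"
  proof (cases "a \<le> b \<and> b \<le> n")
    case False
    hence "x \<notin> set L" "x \<notin> set L'" using L L' x by (auto simp: barcode_def)
    thus ?thesis by (simp add: count_mset)
  next
    case True
    \<comment> \<open>each of the four counts is either a value of bar\_count or zero for both lists\<close>
    have eq: "length (filter (\<lambda>x. fst x \<le> a' \<and> b' \<le> snd x) L) = length (filter (\<lambda>x. fst x \<le> a' \<and> b' \<le> snd x) L')"
      if "a' \<le> a" "b \<le> b'" for a' b'
    proof (cases "b' \<le> n")
      case True thus ?thesis using count[of a' b'] \<open>a \<le> b \<and> b \<le> n\<close> that by (simp add: bar_count_def)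
    next
      case False
      hence "filter (\<lambda>x. fst x \<le> a' \<and> b' \<le> snd x) L = []" "filter (\<lambda>x. fst x \<le> a' \<and> b' \<le> snd x) L' = []"
        using L L' by (auto simp: barcode_def filter_empty_conv)
      thus ?thesis by simp
    qed
    have lt: "(\<lambda>x::nat \<times> nat. fst x < a \<and> P x) = (if a = 0 then (\<lambda>_. False) else (\<lambda>x. fst x \<le> a - 1 \<and> P x))" for P
      by (auto simp: fun_eq_iff)
    have gt: "(\<lambda>x::nat \<times> nat. P x \<and> b < snd x) = (\<lambda>x. P x \<and> Suc b \<le> snd x)" for P
      by auto
    have "int (count (mset L) x) = int (count (mset L') x)"
      unfolding x count_mset count_list_eq_length_filter count_bar_inclusion_exclusion lt gt
      using eq[of a b] eq[of "a - 1" b] eq[of a "Suc b"] eq[of "a - 1" "Suc b"] by (cases "a = 0") simp_all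
    thus ?thesis by simp
  qed
qed

text \<open>The automorphism of the barcode representation on [0, n] that acts by the matrix U on the
  bars alive at n and as the identity on all other bars. It is natural when U is upper triangular:
  a bar alive at n can then only be mixed into older bars, which are alive wherever it is.\<close>

definition auto_entry :: "nat list \<Rightarrow> 'a mat \<Rightarrow> nat \<Rightarrow> nat \<Rightarrow> 'a::field" where
  "auto_entry cn U x y = (if x \<in> set cn \<and> y \<in> set cn then U $$ (pos cn x, pos cn y) else if x = y then 1 else 0)"

definition bar_auto :: "(nat \<times> nat) list \<Rightarrow> nat \<Rightarrow> 'a mat \<Rightarrow> nat \<Rightarrow> 'a::field mat" where
  "bar_auto L n U i = lmat (bars_at L i) (bars_at L i) (auto_entry (bars_at L n) U)"

lemma barcode_older:
  assumes "barcode L n" "a < length L" "b < length L" "fst (L ! a) < fst (L ! b)"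
  shows "a < b"
proof (rule ccontr)
  assume "\<not> a < b"
  hence "map fst L ! b \<le> map fst L ! a" using assms by (intro sorted_nth_mono) (auto simp: barcode_def)
  thus False using assms by simp
qed

lemma auto_entry_lower:
  assumes U: "U \<in> carrier_mat (length (bars_at L n)) (length (bars_at L n))" and tri: "upper_triangular U"
    and x: "x \<in> set (bars_at L n)" and "y < x"
  shows "auto_entry (bars_at L n) U x y = 0"
proof (cases "y \<in> set (bars_at L n)")
  case True
  have "pos (bars_at L n) y < pos (bars_at L n) x" by (rule pos_less[OF bars_at_sorted x True \<open>y < x\<close>])
  moreover have "pos (bars_at L n) x < dim_row U" using pos_in_set[OF bars_at_distinct x] U by simp
  ultimately show ?thesis using tri True x by (simp add: upper_triangular_def auto_entry_def)
qed (use \<open>y < x\<close> in \<open>simp add: auto_entry_def\<close>)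

lemma bar_auto_top:
  assumes "U \<in> carrier_mat (length (bars_at L n)) (length (bars_at L n))"
  shows "bar_auto L n U n = U"
  by (rule eq_matI) (use assms in \<open>auto simp: bar_auto_def auto_entry_def pos_nth\<close>)

lemma bar_auto_natural:
  assumes L: "barcode L n" and U: "U \<in> carrier_mat (length (bars_at L n)) (length (bars_at L n))"
    and tri: "upper_triangular U" and ij: "i \<le> j" and jn: "j \<le> n"
  shows "snd (bar_rep L) i j * bar_auto L n U i = bar_auto L n U j * (snd (bar_rep L) i j :: 'a::field mat)"
  unfolding snd_bar_rep bar_auto_def lmat_mult[OF bars_at_distinct]
proof (rule lmat_cong)
  let ?f = "auto_entry (bars_at L n) U"
  fix x y assume x: "x \<in> set (bars_at L j)" and y: "y \<in> set (bars_at L i)"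
  have l: "(\<Sum>z\<in>set (bars_at L i). (if x = z then 1 else 0) * ?f z y) = (if x \<in> set (bars_at L i) then ?f x y else 0)"
    by (simp add: sum_delta_mult_left)
  have r: "(\<Sum>z\<in>set (bars_at L j). ?f x z * (if z = y then 1 else 0)) = (if y \<in> set (bars_at L j) then ?f x y else 0)"
    by (simp add: sum_delta_mult_right)
  have xl: "x < length L" "fst (L ! x) \<le> j" "j \<le> snd (L ! x)" using x by (auto simp: mem_bars_at alive_def)
  have yl: "y < length L" "fst (L ! y) \<le> i" "i \<le> snd (L ! y)" using y by (auto simp: mem_bars_at alive_def)
  have c1: "?f x y = 0" if "x \<in> set (bars_at L i)" "y \<notin> set (bars_at L j)"
  proof -
    have "snd (L ! y) < j" using that(2) yl ij by (auto simp: mem_bars_at alive_def)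
    hence "y \<notin> set (bars_at L n)" using jn by (auto simp: mem_bars_at alive_def)
    moreover have "x \<noteq> y" using that x by auto
    ultimately show ?thesis by (simp add: auto_entry_def)
  qed
  have c2: "?f x y = 0" if "x \<notin> set (bars_at L i)" "y \<in> set (bars_at L j)"
  proof -
    \<comment> \<open>x is born after i, hence is younger than y\<close>
    have "i < fst (L ! x)" using that(1) xl ij by (auto simp: mem_bars_at alive_def)
    hence "y < x" using barcode_older[OF L yl(1) xl(1)] yl by simp
    thus ?thesis
      using auto_entry_lower[OF U tri, of x y] by (cases "x \<in> set (bars_at L n)") (auto simp: auto_entry_def)
  qed
  show "(\<Sum>z\<in>set (bars_at L i). (if x = z then 1 else 0) * ?f z y) = (\<Sum>z\<in>set (bars_at L j). ?f x z * (if z = y then 1 else 0))"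
    unfolding l r by (cases "x \<in> set (bars_at L i)"; cases "y \<in> set (bars_at L j)") (simp_all add: c1 c2)
qed

lemma sum_pos_mult:
  assumes U: "U \<in> carrier_mat (length cn) (length cn)" and V: "V \<in> carrier_mat (length cn) (length cn)"
    and UV: "U * V = 1\<^sub>m (length cn)" and dist: "distinct cn" and x: "x \<in> set cn" and y: "y \<in> set cn"
  shows "(\<Sum>z\<in>set cn. U $$ (pos cn x, pos cn z) * V $$ (pos cn z, pos cn y)) = (if x = y then 1 else (0::'a::field))"
proof -
  have "(\<Sum>z\<in>set cn. U $$ (pos cn x, pos cn z) * V $$ (pos cn z, pos cn y))
      = (\<Sum>r<length cn. U $$ (pos cn x, pos cn (cn ! r)) * V $$ (pos cn (cn ! r), pos cn y))"
    by (rule sum.reindex_bij_betw[OF bij_betw_nth[OF dist refl refl], symmetric])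
  also have "\<dots> = (\<Sum>r<length cn. U $$ (pos cn x, r) * V $$ (r, pos cn y))"
    by (intro sum.cong) (auto simp: pos_nth[OF dist])
  also have "\<dots> = (U * V) $$ (pos cn x, pos cn y)"
    using pos_in_set[OF dist x] pos_in_set[OF dist y] by (subst index_mult_mat_sum[OF U V]) auto
  also have "\<dots> = (if x = y then 1 else 0)"
  proof -
    have "pos cn x = pos cn y \<longleftrightarrow> x = y" using pos_in_set(2)[OF dist x] pos_in_set(2)[OF dist y] by metis
    thus ?thesis unfolding UV using pos_in_set(1)[OF dist x] pos_in_set(1)[OF dist y] by simp
  qed
  finally show ?thesis .
qed

lemma bar_auto_mult:
  assumes L: "barcode L n" and U: "U \<in> carrier_mat (length (bars_at L n)) (length (bars_at L n))"
    and V: "V \<in> carrier_mat (length (bars_at L n)) (length (bars_at L n))"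
    and tri: "upper_triangular V" and UV: "U * V = 1\<^sub>m (length (bars_at L n))" and i: "i \<le> n"
  shows "bar_auto L n U i * bar_auto L n V i = (1\<^sub>m (length (bars_at L i)) :: 'a::field mat)"
  unfolding bar_auto_def lmat_mult[OF bars_at_distinct] lmat_delta_one[OF bars_at_distinct, symmetric]
proof (rule lmat_cong)
  let ?cn = "bars_at L n"
  let ?f = "auto_entry ?cn U" and ?h = "auto_entry ?cn V"
  fix x y assume x: "x \<in> set (bars_at L i)" and y: "y \<in> set (bars_at L i)"
  show "(\<Sum>z\<in>set (bars_at L i). ?f x z * ?h z y) = (if x = y then 1 else 0)"
  proof (cases "x \<in> set ?cn")
    case False
    have "(\<Sum>z\<in>set (bars_at L i). ?f x z * ?h z y) = (\<Sum>z\<in>set (bars_at L i). (if x = z then 1 else 0) * ?h z y)"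
      using False by (intro sum.cong) (auto simp: auto_entry_def)
    also have "\<dots> = ?h x y" using x by (simp add: sum_delta_mult_left)
    finally show ?thesis using False by (simp add: auto_entry_def)
  next
    case xc: True
    show ?thesis
    proof (cases "y \<in> set ?cn")
      case False
      have "(\<Sum>z\<in>set (bars_at L i). ?f x z * ?h z y) = (\<Sum>z\<in>set (bars_at L i). ?f x z * (if z = y then 1 else 0))"
        using False by (intro sum.cong) (auto simp: auto_entry_def)
      also have "\<dots> = ?f x y" using y by (simp add: sum_delta_mult_right)
      finally show ?thesis using False xc by (auto simp: auto_entry_def)
    next
      case yc: True
      have "(\<Sum>z\<in>set (bars_at L i). ?f x z * ?h z y) =
          (\<Sum>z\<in>set (bars_at L i). if z \<in> set ?cn then U $$ (pos ?cn x, pos ?cn z) * V $$ (pos ?cn z, pos ?cn y) else 0)"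
      proof (rule sum.cong[OF refl])
        fix z
        show "?f x z * ?h z y = (if z \<in> set ?cn then U $$ (pos ?cn x, pos ?cn z) * V $$ (pos ?cn z, pos ?cn y) else 0)"
        proof (cases "z \<in> set ?cn")
          case False
          hence "x \<noteq> z" using xc by auto
          thus ?thesis using False by (simp add: auto_entry_def)
        qed (simp add: auto_entry_def xc yc)
      qed
      also have "\<dots> = (\<Sum>z\<in>set (bars_at L i) \<inter> set ?cn. U $$ (pos ?cn x, pos ?cn z) * V $$ (pos ?cn z, pos ?cn y))"
        by (simp add: sum.inter_restrict)
      also have "\<dots> = (\<Sum>z\<in>set ?cn. U $$ (pos ?cn x, pos ?cn z) * V $$ (pos ?cn z, pos ?cn y))"
      proof (rule sum.mono_neutral_left)
        show "\<forall>z\<in>set ?cn - set (bars_at L i) \<inter> set ?cn. U $$ (pos ?cn x, pos ?cn z) * V $$ (pos ?cn z, pos ?cn y) = 0"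
        proof
          \<comment> \<open>a bar alive at n but not at i is younger than y\<close>
          fix z assume z: "z \<in> set ?cn - set (bars_at L i) \<inter> set ?cn"
          have zl: "z < length L" "fst (L ! z) \<le> n" "n \<le> snd (L ! z)" using z by (auto simp: mem_bars_at alive_def)
          have yl: "y < length L" "fst (L ! y) \<le> i" using y by (auto simp: mem_bars_at alive_def)
          have "\<not> alive L i z" using z zl(1) by (auto simp: mem_bars_at)
          hence "i < fst (L ! z)" using zl i by (auto simp: alive_def)
          hence "y < z" using barcode_older[OF L yl(1) zl(1)] yl by simp
          hence "V $$ (pos ?cn z, pos ?cn y) = 0" using auto_entry_lower[OF V tri, of z y] z yc by (simp add: auto_entry_def)
          thus "U $$ (pos ?cn x, pos ?cn z) * V $$ (pos ?cn z, pos ?cn y) = 0" by simp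
        qed
      qed auto
      also have "\<dots> = (if x = y then 1 else 0)" by (rule sum_pos_mult[OF U V UV bars_at_distinct xc yc])
      finally show ?thesis .
    qed
  qed
qed

lemma bar_auto_iso:
  assumes L: "barcode L n"
    and U: "U \<in> carrier_mat (length (bars_at L n)) (length (bars_at L n))"
    and Ui: "Ui \<in> carrier_mat (length (bars_at L n)) (length (bars_at L n))"
    and UUi: "U * Ui = 1\<^sub>m (length (bars_at L n))" and UiU: "Ui * U = 1\<^sub>m (length (bars_at L n))"
    and tri: "upper_triangular U" "upper_triangular Ui"
  shows "rep_iso_by {0..n} (\<le>) (bar_rep L :: (nat,'a::field) rep) (bar_rep L) (bar_auto L n U) (bar_auto L n Ui)"
  using bar_auto_natural[OF L U tri(1)] bar_auto_mult[OF L U Ui tri(2) UUi] bar_auto_mult[OF L Ui U tri(1) UiU]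
  by (intro rep_iso_byI) (auto simp: fst_bar_rep bar_auto_def)

lemma rep_iso_by_extend_Suc:
  fixes M N :: "(nat,'a::field) rep"
  assumes M: "is_rep {0..Suc n} (\<le>) M" and N: "is_rep {0..Suc n} (\<le>) N"
    and iso: "rep_iso_by {0..n} (\<le>) M N \<phi> \<psi>"
    and g: "g \<in> carrier_mat (fst N (Suc n)) (fst M (Suc n))" "gi \<in> carrier_mat (fst M (Suc n)) (fst N (Suc n))"
      "g * gi = 1\<^sub>m (fst N (Suc n))" "gi * g = 1\<^sub>m (fst M (Suc n))"
    and top: "snd N n (Suc n) * \<phi> n = g * snd M n (Suc n)"
  shows "rep_iso_by {0..Suc n} (\<le>) M N (\<phi>(Suc n := g)) (\<psi>(Suc n := gi))"
proof (rule rep_iso_byI)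
  fix x assume "x \<in> {0..Suc n}"
  hence "x \<le> n \<or> x = Suc n" by auto
  thus "(\<phi>(Suc n := g)) x \<in> carrier_mat (fst N x) (fst M x)" "(\<psi>(Suc n := gi)) x \<in> carrier_mat (fst M x) (fst N x)"
    "(\<phi>(Suc n := g)) x * (\<psi>(Suc n := gi)) x = 1\<^sub>m (fst N x)" "(\<psi>(Suc n := gi)) x * (\<phi>(Suc n := g)) x = 1\<^sub>m (fst M x)"
    using rep_iso_byD(1-4)[OF iso, of x] g by auto
next
  fix x y assume "x \<in> {0..Suc n}" "y \<in> {0..Suc n}" and xy: "x \<le> y"
  hence "y \<le> n \<or> x \<le> n \<and> y = Suc n \<or> x = Suc n \<and> y = Suc n" by auto
  thus "snd N x y * (\<phi>(Suc n := g)) x = (\<phi>(Suc n := g)) y * snd M x y"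
  proof (elim disjE conjE)
    assume "y \<le> n"
    thus ?thesis using rep_iso_byD(5)[OF iso, of x y] xy by simp
  next
    assume "x = Suc n" "y = Suc n"
    thus ?thesis using is_repD(2)[OF M, of "Suc n" "Suc n"] is_repD(2)[OF N, of "Suc n" "Suc n"] g(1) by simp
  next
    assume x: "x \<le> n" and y: "y = Suc n"
    note c = rep_iso_byD(1)[OF iso, of x] rep_iso_byD(1)[OF iso, of n] g(1)
      is_repD(1)[OF M, of x n] is_repD(1)[OF M, of n "Suc n"] is_repD(1)[OF N, of x n] is_repD(1)[OF N, of n "Suc n"]
    note dims = c[THEN carrier_matD(1)] c[THEN carrier_matD(2)]
    have "snd N x (Suc n) * \<phi> x = snd N n (Suc n) * (snd N x n * \<phi> x)"
      using is_repD(3)[OF N, of x n "Suc n"] x dims by (simp add: assoc_mult_mat_dims del: assoc_mult_mat)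
    also have "\<dots> = (snd N n (Suc n) * \<phi> n) * snd M x n"
      using rep_iso_byD(5)[OF iso, of x n] x dims by (simp add: assoc_mult_mat_dims del: assoc_mult_mat)
    also have "\<dots> = g * snd M x (Suc n)"
      using top is_repD(3)[OF M, of x n "Suc n"] x dims by (simp add: assoc_mult_mat_dims del: assoc_mult_mat)
    finally show ?thesis using x y by simp
  qed
qed

definition extend_bars :: "(nat \<times> nat) list \<Rightarrow> nat list \<Rightarrow> nat \<Rightarrow> nat \<Rightarrow> (nat \<times> nat) list" where
  "extend_bars L W k m =
     map (\<lambda>p. if p \<in> set W then (fst (L ! p), m) else L ! p) [0..<length L] @ replicate k (m, m)"

lemma extend_bars_nth:
  "length (extend_bars L W k m) = length L + k"
  "p < length L \<Longrightarrow> extend_bars L W k m ! p = (if p \<in> set W then (fst (L ! p), m) else L ! p)"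
  "length L \<le> p \<Longrightarrow> p < length L + k \<Longrightarrow> extend_bars L W k m ! p = (m, m)"
  by (simp_all add: extend_bars_def nth_append)

lemma bars_at_extend_bars:
  assumes L: "barcode L n" and W: "set W \<subseteq> set (bars_at L n)"
  shows "i \<le> n \<Longrightarrow> bars_at (extend_bars L W k (Suc n)) i = bars_at L i"
    and "sorted_wrt (<) W \<Longrightarrow> bars_at (extend_bars L W k (Suc n)) (Suc n) = W @ [length L..<length L + k]"
proof -
  let ?L' = "extend_bars L W k (Suc n)"
  have split: "bars_at ?L' i = filter (alive ?L' i) [0..<length L] @ filter (alive ?L' i) [length L..<length L + k]" for i
    unfolding bars_at_def extend_bars_nth(1) upt_add_eq_append[OF le0] by simp
  have L_le: "fst (L ! p) \<le> snd (L ! p) \<and> snd (L ! p) \<le> n" if "p < length L" for p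
    using L nth_mem[OF that] by (auto simp: barcode_def)
  have W_n: "snd (L ! p) = n \<and> fst (L ! p) \<le> n \<and> p < length L" if "p \<in> set W" for p
    using W that L_le by (force simp: mem_bars_at alive_def)
  show "bars_at ?L' i = bars_at L i" if i: "i \<le> n"
  proof -
    have "filter (alive ?L' i) [0..<length L] = filter (alive L i) [0..<length L]"
    proof (rule filter_cong[OF refl])
      fix p assume "p \<in> set [0..<length L]"
      thus "alive ?L' i p = alive L i p" using W_n[of p] i by (cases "p \<in> set W") (auto simp: extend_bars_nth alive_def)
    qed
    moreover have "filter (alive ?L' i) [length L..<length L + k] = []"
      using i by (auto simp: filter_empty_conv extend_bars_nth alive_def)
    ultimately show ?thesis unfolding split by (simp add: bars_at_def)
  qed
  assume sorted: "sorted_wrt (<) W"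
  have "filter (alive ?L' (Suc n)) [0..<length L] = filter (\<lambda>p. p \<in> set W) [0..<length L]"
  proof (rule filter_cong[OF refl])
    fix p assume "p \<in> set [0..<length L]"
    thus "alive ?L' (Suc n) p = (p \<in> set W)"
      using W_n[of p] L_le[of p] by (cases "p \<in> set W") (auto simp: extend_bars_nth alive_def)
  qed
  also have "\<dots> = W"
    by (rule sorted_distinct_set_unique) (use sorted W_n in \<open>auto simp: strict_sorted_iff sorted_wrt_filter\<close>)
  moreover have "filter (alive ?L' (Suc n)) [length L..<length L + k] = [length L..<length L + k]"
    by (auto simp: extend_bars_nth alive_def)
  ultimately show "bars_at ?L' (Suc n) = W @ [length L..<length L + k]" unfolding split by simp
qed

lemma barcode_extend_bars:
  assumes L: "barcode L n" and W: "set W \<subseteq> set (bars_at L n)"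
  shows "barcode (extend_bars L W k (Suc n)) (Suc n)"
proof -
  have "map fst (map (\<lambda>p. if p \<in> set W then (fst (L ! p), Suc n) else L ! p) [0..<length L])
      = map (\<lambda>p. fst (L ! p)) [0..<length L]"
    by (simp add: if_distrib[of fst] cong: map_cong)
  also have "\<dots> = map fst (map (\<lambda>p. L ! p) [0..<length L])" by simp
  also have "map (\<lambda>p. L ! p) [0..<length L] = L" by (rule map_nth)
  finally have "map fst (extend_bars L W k (Suc n)) = map fst L @ replicate k (Suc n)"
    by (simp add: extend_bars_def)
  moreover have "sorted (map fst L @ replicate k (Suc n))"
    unfolding sorted_append
  proof (intro conjI ballI)
    show "sorted (map fst L)" using L unfolding barcode_def by simp
    fix x y assume x: "x \<in> set (map fst L)" and y: "y \<in> set (replicate k (Suc n))"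
    from x obtain z where z: "z \<in> set L" "x = fst z" by auto
    have "fst z \<le> snd z \<and> snd z \<le> n" using L z(1) unfolding barcode_def by blast
    thus "x \<le> y" using z(2) y by simp
  qed simp
  moreover have "fst x \<le> snd x \<and> snd x \<le> Suc n" if x: "x \<in> set (extend_bars L W k (Suc n))" for x
  proof -
    obtain p where p: "p < length L + k" "x = extend_bars L W k (Suc n) ! p"
      using x by (auto simp: in_set_conv_nth extend_bars_nth(1))
    show ?thesis
    proof (cases "p < length L")
      case True
      have "fst (L ! p) \<le> snd (L ! p) \<and> snd (L ! p) \<le> n" using L nth_mem[OF True] by (auto simp: barcode_def)
      moreover have "p \<in> set W \<Longrightarrow> fst (L ! p) \<le> n" using W by (auto simp: mem_bars_at alive_def)
      ultimately show ?thesis using True p(2) by (auto simp: extend_bars_nth(2))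
    next
      case False thus ?thesis using p by (simp add: extend_bars_nth(3))
    qed
  qed
  ultimately show ?thesis by (simp add: barcode_def)
qed

lemma extend_bars_top_map:
  assumes L: "barcode L n" and zs: "sorted_wrt (<) zs" "set zs \<subseteq> {..<length (bars_at L n)}" "length zs \<le> d"
  defines "L' \<equiv> extend_bars L (map ((!) (bars_at L n)) zs) (d - length zs) (Suc n)"
  shows "fst (bar_rep L' :: (nat,'a::field) rep) (Suc n) = d"
    and "snd (bar_rep L' :: (nat,'a) rep) n (Suc n) = canon d (length (bars_at L n)) zs"
proof -
  let ?cn = "bars_at L n" and ?W = "map ((!) (bars_at L n)) zs"
  have W: "set ?W \<subseteq> set ?cn" using zs(2) by auto
  have "sorted_wrt (<) ?W" unfolding sorted_wrt_map
  proof (rule sorted_wrt_mono_rel[OF _ zs(1)])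
    fix a b assume "a \<in> set zs" "b \<in> set zs" "a < b"
    thus "?cn ! a < ?cn ! b" using zs(2) sorted_wrt_nth_less[OF bars_at_sorted, of a b L n] by auto
  qed
  hence top: "bars_at L' (Suc n) = ?W @ [length L..<length L + (d - length zs)]"
    unfolding L'_def by (rule bars_at_extend_bars(2)[OF L W])
  have below: "bars_at L' n = ?cn" unfolding L'_def by (rule bars_at_extend_bars(1)[OF L W le_refl])
  show dim: "fst (bar_rep L' :: (nat,'a) rep) (Suc n) = d" using zs(3) by (simp add: fst_bar_rep top)
  show "snd (bar_rep L' :: (nat,'a) rep) n (Suc n) = canon d (length ?cn) zs"
  proof (rule eq_matI)
    fix r q assume "r < dim_row (canon d (length ?cn) zs :: 'a mat)" "q < dim_col (canon d (length ?cn) zs :: 'a mat)"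
    hence r: "r < d" and q: "q < length ?cn" by auto
    have e: "snd (bar_rep L' :: (nat,'a) rep) n (Suc n) $$ (r,q) = (if bars_at L' (Suc n) ! r = ?cn ! q then 1 else 0)"
      unfolding snd_bar_rep using r q dim by (simp add: below fst_bar_rep)
    show "snd (bar_rep L' :: (nat,'a) rep) n (Suc n) $$ (r,q) = canon d (length ?cn) zs $$ (r,q)"
    proof (cases "r < length zs")
      case True
      have zr: "zs ! r < length ?cn" using zs(2) nth_mem[OF True] by auto
      have "(bars_at L' (Suc n) ! r = ?cn ! q) = (zs ! r = q)"
        unfolding top using True nth_eq_iff_index_eq[OF bars_at_distinct zr q] by (simp add: nth_append)
      thus ?thesis unfolding e using True r q by (simp add: canon_def)
    next
      case False
      have "?cn ! q < length L" using nth_mem[OF q] by (simp add: mem_bars_at)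
      moreover have "bars_at L' (Suc n) ! r = length L + (r - length zs)"
        unfolding top using False r zs(3) by (simp add: nth_append)
      ultimately have "bars_at L' (Suc n) ! r \<noteq> ?cn ! q" by simp
      thus ?thesis unfolding e using False r q by (simp add: canon_def)
    qed
  qed (use dim in \<open>simp_all add: snd_bar_rep below fst_bar_rep\<close>)
qed

text \<open>The induction step: put the map into [n+1] in canonical form by a base change at n+1 and an
  upper triangular base change of the bars alive at n. The bars hit by a pivot are prolonged, and
  the cokernel contributes new bars born at n+1.\<close>

lemma barcode_step:
  fixes M :: "(nat,'a::field) rep"
  assumes M: "is_rep {0..Suc n} (\<le>) M" and L: "barcode L n" and iso: "rep_iso {0..n} (\<le>) M (bar_rep L)"
  obtains L' where "barcode L' (Suc n)" "rep_iso {0..Suc n} (\<le>) M (bar_rep L')"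
proof -
  obtain \<phi> \<psi> where \<phi>: "rep_iso_by {0..n} (\<le>) M (bar_rep L) \<phi> \<psi>" using iso unfolding rep_iso_iff_by by blast
  define s d where "s = length (bars_at L n)" and "d = fst M (Suc n)"
  have Mn: "snd M n (Suc n) \<in> carrier_mat d (fst M n)" unfolding d_def by (rule is_repD(1)[OF M]) auto
  have \<psi>n: "\<psi> n \<in> carrier_mat (fst M n) s" and \<phi>n: "\<phi> n \<in> carrier_mat s (fst M n)"
    using rep_iso_byD(1,2)[OF \<phi>, of n] by (simp_all add: fst_bar_rep s_def)
  obtain G Gi U Ui zs where G: "G \<in> carrier_mat d d" "Gi \<in> carrier_mat d d" "G * Gi = 1\<^sub>m d" "Gi * G = 1\<^sub>m d"
    and U: "U \<in> carrier_mat s s" "Ui \<in> carrier_mat s s" "U * Ui = 1\<^sub>m s" "Ui * U = 1\<^sub>m s"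
    "upper_triangular U" "upper_triangular Ui"
    and zs: "sorted_wrt (<) zs" "set zs \<subseteq> {..<s}" "length zs \<le> d"
    and red: "G * (snd M n (Suc n) * \<psi> n) * U = canon d s zs"
    using canonical_form[OF mult_carrier_mat[OF Mn \<psi>n]] by blast
  define L' where "L' = extend_bars L (map ((!) (bars_at L n)) zs) (d - length zs) (Suc n)"
  have W: "set (map ((!) (bars_at L n)) zs) \<subseteq> set (bars_at L n)" using zs(2) by (auto simp: s_def)
  have L': "barcode L' (Suc n)" unfolding L'_def by (rule barcode_extend_bars[OF L W])
  note top = extend_bars_top_map[OF L zs(1) zs(2)[unfolded s_def] zs(3), folded L'_def s_def, where 'a = 'a]
  have agree: "rep_agree {0..n} (\<le>) (bar_rep L) (bar_rep L')"
    unfolding rep_agree_def L'_def fst_bar_rep snd_bar_rep by (simp add: bars_at_extend_bars(1)[OF L W])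
  note c = G(1) U(1,2) Mn \<psi>n \<phi>n
  note dims = c[THEN carrier_matD(1)] c[THEN carrier_matD(2)]
  have auto: "rep_iso_by {0..n} (\<le>) (bar_rep L) (bar_rep L) (bar_auto L n Ui) (bar_auto L n U)"
    using U by (intro bar_auto_iso[OF L]) (simp_all add: s_def)
  have M_n: "is_rep {0..n} (\<le>) M" by (rule is_rep_mono[OF M]) auto
  have iso': "rep_iso_by {0..n} (\<le>) M (bar_rep L') (\<lambda>x. bar_auto L n Ui x * \<phi> x) (\<lambda>x. \<psi> x * bar_auto L n U x)"
    by (rule rep_iso_by_agree[OF rep_iso_by_trans[OF \<phi> auto M_n is_rep_bar_rep is_rep_bar_rep] agree])
  have "bar_auto L n Ui n = Ui" using U(2) by (simp add: bar_auto_top s_def)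
  hence "snd (bar_rep L') n (Suc n) * (bar_auto L n Ui n * \<phi> n) = canon d s zs * (Ui * \<phi> n)"
    using top(2) by (simp add: s_def)
  also have "\<dots> = canon d s zs * Ui * \<phi> n" by (rule assoc_mult_mat[symmetric, OF canon_carrier(1) U(2) \<phi>n])
  also have "\<dots> = G * snd M n (Suc n) * \<psi> n * (U * Ui) * \<phi> n"
    unfolding red[symmetric] using dims by (simp add: assoc_mult_mat_dims del: assoc_mult_mat)
  also have "G * snd M n (Suc n) * \<psi> n * (U * Ui) = G * snd M n (Suc n) * \<psi> n"
    using U(3) G(1) Mn \<psi>n by simp
  also have "G * snd M n (Suc n) * \<psi> n * \<phi> n = G * snd M n (Suc n) * (\<psi> n * \<phi> n)"
    using dims by (simp add: assoc_mult_mat_dims del: assoc_mult_mat)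
  also have "\<dots> = G * snd M n (Suc n)"
    using rep_iso_byD(4)[OF \<phi>, of n] G(1) Mn by simp
  finally have "rep_iso_by {0..Suc n} (\<le>) M (bar_rep L') ((\<lambda>x. bar_auto L n Ui x * \<phi> x)(Suc n := G))
      ((\<lambda>x. \<psi> x * bar_auto L n U x)(Suc n := Gi))"
    using G top(1) by (intro rep_iso_by_extend_Suc[OF M is_rep_bar_rep iso']) (simp_all add: d_def)
  thus ?thesis using that L' unfolding rep_iso_iff_by by blast
qed

theorem interval_decomposition:
  fixes M :: "(nat,'a::field) rep"
  assumes "is_rep {0..n} (\<le>) M"
  shows "\<exists>L. barcode L n \<and> rep_iso {0..n} (\<le>) M (bar_rep L)"
  using assms
proof (induct n)
  case 0
  define L where "L = replicate (fst M 0) (0::nat, 0::nat)"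
  have "bars_at L 0 = [0..<fst M 0]" by (simp add: bars_at_def L_def alive_def)
  hence "rep_agree {0..0} (\<le>) M (bar_rep L)"
    using is_repD(2)[OF 0, of 0 0] by (auto simp: rep_agree_def fst_bar_rep snd_bar_rep lmat_delta_one)
  moreover have "barcode L 0" by (simp add: barcode_def L_def)
  ultimately show ?case using rep_iso_of_agree[OF 0] by blast
next
  case (Suc n)
  have "is_rep {0..n} (\<le>) M" by (rule is_rep_mono[OF Suc.prems]) auto
  then obtain L where "barcode L n" "rep_iso {0..n} (\<le>) M (bar_rep L)" using Suc.hyps by blast
  then obtain L' where "barcode L' (Suc n)" "rep_iso {0..Suc n} (\<le>) M (bar_rep L')"
    using barcode_step[OF Suc.prems] by blast
  thus ?case by blast
qed

theorem rep_iso_of_rk: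
  fixes M N :: "(nat,'a::field) rep"
  assumes M: "is_rep {0..n} (\<le>) M" and N: "is_rep {0..n} (\<le>) N"
    and rk: "\<And>i j. i \<le> j \<Longrightarrow> j \<le> n \<Longrightarrow> rk M i j = rk N i j"
  shows "rep_iso {0..n} (\<le>) M N"
proof -
  obtain L where L: "barcode L n" and M_iso: "rep_iso {0..n} (\<le>) M (bar_rep L)"
    using interval_decomposition[OF M] by blast
  obtain L' where L': "barcode L' n" and N_iso: "rep_iso {0..n} (\<le>) N (bar_rep L')"
    using interval_decomposition[OF N] by blast
  have "bar_count L i j = bar_count L' i j" if ij: "i \<le> j" "j \<le> n" for i j
  proof -
    have P: "i \<in> {0..n}" "j \<in> {0..n}" using ij by auto
    show ?thesis
      using rk_iso[OF M_iso M is_rep_bar_rep P ij(1)] rk_iso[OF N_iso N is_rep_bar_rep P ij(1)] rk[OF ij]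
        rk_bar_rep[OF ij(1), of L, where 'a='a] rk_bar_rep[OF ij(1), of L', where 'a='a]
      by linarith
  qed
  hence "rep_iso {0..n} (\<le>) (bar_rep L :: (nat,'a) rep) (bar_rep L')"
    by (intro bar_rep_perm_iso mset_eq_of_bar_count[OF L L'])
  hence "rep_iso {0..n} (\<le>) M (bar_rep L')" by (rule rep_iso_trans[OF M_iso _ M is_rep_bar_rep is_rep_bar_rep])
  thus ?thesis by (rule rep_iso_trans[OF _ rep_iso_sym[OF N_iso N is_rep_bar_rep] M is_rep_bar_rep N])
qed

section \<open>The split Grothendieck group\<close>

lemma is_grel_add: "is_grel P ord x \<Longrightarrow> is_grel P ord y \<Longrightarrow> is_grel P ord (gr_add x y)"
  by (simp add: is_grel_def gr_add_def is_rep_dsum)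

lemma is_grel_smul: "is_grel P ord x \<Longrightarrow> is_grel P ord (gr_smul a x)"
  by (simp add: is_grel_def gr_smul_def is_rep_pow)

lemma is_grel_of: "is_rep P ord M \<Longrightarrow> is_grel P ord (gr_of M)"
  by (simp add: is_grel_def gr_of_def is_rep_zero)

lemma is_grel_pull:
  assumes "is_grel P ord x" "\<And>z. z \<in> Q \<Longrightarrow> F z \<in> P"
    "\<And>z w. z \<in> Q \<Longrightarrow> w \<in> Q \<Longrightarrow> ord' z w \<Longrightarrow> ord (F z) (F w)"
  shows "is_grel Q ord' (gr_pull F x)"
  using assms unfolding is_grel_def gr_pull_def by (auto intro: is_rep_pull)

lemma gr_pull_add: "gr_pull F (gr_add x y) = gr_add (gr_pull F x) (gr_pull F y)"
  by (simp add: gr_pull_def gr_add_def pull_dsum)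

lemma gr_pull_smul: "gr_pull F (gr_smul a x) = gr_smul a (gr_pull F x)"
  by (simp add: gr_pull_def gr_smul_def pull_pow)

lemma gr_pull_of: "gr_pull F (gr_of M) = (pull F M, zero_rep)"
  by (simp add: gr_pull_def gr_of_def pull_zero)

lemma gr_eq_refl: "is_grel P ord x \<Longrightarrow> gr_eq P ord x x"
  unfolding gr_eq_def
  by (intro exI[of _ zero_rep] conjI is_rep_zero rep_iso_refl) (auto simp: is_grel_def intro!: is_rep_dsum is_rep_zero)

lemma gr_eq_of_agree:
  assumes M: "is_rep P ord M" and K: "is_rep P ord K" and agree: "rep_agree P ord M N"
  shows "gr_eq P ord (M, K) (N, K)"
  unfolding gr_eq_def fst_conv snd_conv
proof (intro exI conjI)
  show "rep_iso P ord (dsum (dsum M K) zero_rep) (dsum (dsum N K) zero_rep)"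
    by (intro rep_iso_of_agree is_rep_dsum M K is_rep_zero rep_agree_dsum agree rep_agree_refl)
qed (rule is_rep_zero)

lemma gr_eq_mono:
  assumes "gr_eq P ord x y" and "\<And>p q. p \<in> P \<Longrightarrow> q \<in> P \<Longrightarrow> ord' p q \<Longrightarrow> ord p q"
  shows "gr_eq P ord' x y"
proof -
  obtain X where X: "is_rep P ord X"
    and iso: "rep_iso P ord (dsum (dsum (fst x) (snd y)) X) (dsum (dsum (fst y) (snd x)) X)"
    using assms(1) unfolding gr_eq_def by blast
  show ?thesis
    unfolding gr_eq_def using assms(2) by (intro exI[of _ X] conjI is_rep_mono[OF X] rep_iso_mono[OF iso]) auto
qed

lemma gr_eq_add:
  assumes e1: "gr_eq P ord x y" and e2: "gr_eq P ord x' y'"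
    and "is_grel P ord x" "is_grel P ord y" "is_grel P ord x'" "is_grel P ord y'"
  shows "gr_eq P ord (gr_add x x') (gr_add y y')"
proof -
  obtain X where X: "is_rep P ord X"
    and i: "rep_iso P ord (dsum (dsum (fst x) (snd y)) X) (dsum (dsum (fst y) (snd x)) X)"
    using e1 unfolding gr_eq_def by blast
  obtain X' where X': "is_rep P ord X'"
    and i': "rep_iso P ord (dsum (dsum (fst x') (snd y')) X') (dsum (dsum (fst y') (snd x')) X')"
    using e2 unfolding gr_eq_def by blast
  have "is_rep P ord (fst x)" "is_rep P ord (snd x)" "is_rep P ord (fst y)" "is_rep P ord (snd y)"
    "is_rep P ord (fst x')" "is_rep P ord (snd x')" "is_rep P ord (fst y')" "is_rep P ord (snd y')"
    using assms(3-6) by (auto simp: is_grel_def)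
  note reps = this X X'
  have s1: "rep_iso P ord (dsum (dsum (dsum (fst x) (fst x')) (dsum (snd y) (snd y'))) (dsum X X'))
     (dsum (dsum (dsum (fst x) (snd y)) X) (dsum (dsum (fst x') (snd y')) X'))"
    by (rule rep_iso_trans[OF rep_iso_dsum[OF dsum_interchange rep_iso_refl] dsum_interchange])
      (intro is_rep_dsum reps)+
  have s2: "rep_iso P ord (dsum (dsum (dsum (fst x) (snd y)) X) (dsum (dsum (fst x') (snd y')) X'))
     (dsum (dsum (dsum (fst y) (snd x)) X) (dsum (dsum (fst y') (snd x')) X'))"
    by (rule rep_iso_dsum[OF i i']) (intro is_rep_dsum reps)+
  have s3: "rep_iso P ord (dsum (dsum (dsum (fst y) (snd x)) X) (dsum (dsum (fst y') (snd x')) X'))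
     (dsum (dsum (dsum (fst y) (fst y')) (dsum (snd x) (snd x'))) (dsum X X'))"
    by (rule rep_iso_trans[OF dsum_interchange rep_iso_dsum[OF dsum_interchange rep_iso_refl]])
      (intro is_rep_dsum reps)+
  have "rep_iso P ord (dsum (dsum (dsum (fst x) (fst x')) (dsum (snd y) (snd y'))) (dsum X X'))
     (dsum (dsum (dsum (fst y) (fst y')) (dsum (snd x) (snd x'))) (dsum X X'))"
    by (rule rep_iso_trans[OF s1 rep_iso_trans[OF s2 s3]]) (intro is_rep_dsum reps)+
  thus ?thesis
    unfolding gr_eq_def gr_add_def using X X' by (intro exI[of _ "dsum X X'"] conjI is_rep_dsum) simp_all
qed

lemma gr_eq_swap:
  assumes e: "gr_eq P ord x y" and "is_grel P ord x" "is_grel P ord y"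
  shows "gr_eq P ord (snd x, fst x) (snd y, fst y)"
proof -
  obtain X where X: "is_rep P ord X"
    and i: "rep_iso P ord (dsum (dsum (fst x) (snd y)) X) (dsum (dsum (fst y) (snd x)) X)"
    using e unfolding gr_eq_def by blast
  have "is_rep P ord (fst x)" "is_rep P ord (snd x)" "is_rep P ord (fst y)" "is_rep P ord (snd y)"
    using assms(2,3) by (auto simp: is_grel_def)
  note reps = this X
  have "rep_iso P ord (dsum (dsum (snd x) (fst y)) X) (dsum (dsum (snd y) (fst x)) X)"
    by (rule rep_iso_trans[OF rep_iso_dsum[OF dsum_comm rep_iso_refl]
          rep_iso_trans[OF rep_iso_sym[OF i] rep_iso_dsum[OF dsum_comm rep_iso_refl]]])
      (intro is_rep_dsum reps)+
  thus ?thesis unfolding gr_eq_def using X by (intro exI[of _ X]) simp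
qed

lemma gr_eq_smul:
  assumes e: "gr_eq P ord x y" and gx: "is_grel P ord x" and gy: "is_grel P ord y"
  shows "gr_eq P ord (gr_smul a x) (gr_smul a y)"
proof -
  have g: "is_grel P ord (rep_pow (fst z) k, rep_pow (snd z) k)" if "is_grel P ord z" for z k
    using that by (simp add: is_grel_def is_rep_pow)
  have pow: "gr_eq P ord (rep_pow (fst x) k, rep_pow (snd x) k) (rep_pow (fst y) k, rep_pow (snd y) k)" for k
  proof (induct k)
    case 0
    show ?case using gr_eq_refl[of P ord "(zero_rep, zero_rep)"] by (simp add: is_grel_def is_rep_zero)
  next
    case (Suc k)
    show ?case using gr_eq_add[OF e Suc gx gy g[OF gx] g[OF gy]] by (simp add: gr_add_def)
  qed
  show ?thesis using pow gr_eq_swap[OF pow g[OF gx] g[OF gy]] by (simp add: gr_smul_def)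
qed

section \<open>The rank invariant of a class\<close>

definition gr_rank :: "('p,'a::field) grel \<Rightarrow> 'p \<Rightarrow> 'p \<Rightarrow> int" where
  "gr_rank x p q = int (rk (fst x) p q) - int (rk (snd x) p q)"

lemma gr_rank_add:
  assumes "is_grel P ord x" "is_grel P ord y" "p \<in> P" "q \<in> P" "ord p q"
  shows "gr_rank (gr_add x y) p q = gr_rank x p q + gr_rank y p q"
  using assms unfolding is_grel_def by (simp add: gr_rank_def gr_add_def rk_dsum[of P ord])

lemma gr_rank_smul:
  assumes "is_grel P ord x" "p \<in> P" "q \<in> P" "ord p q"
  shows "gr_rank (gr_smul a x) p q = a * gr_rank x p q"
  using assms by (auto simp: gr_rank_def gr_smul_def is_grel_def rk_pow algebra_simps)

lemma gr_rank_of: "gr_rank (gr_of M) p q = int (rk M p q)"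
  by (simp add: gr_rank_def gr_of_def)

lemma gr_rank_pull: "gr_rank (gr_pull F x) p q = gr_rank x (F p) (F q)"
  by (simp add: gr_rank_def gr_pull_def rk_pull)

lemma gr_eq_imp_gr_rank_eq:
  assumes eq: "gr_eq P ord x y" and gx: "is_grel P ord x" and gy: "is_grel P ord y"
    and pq: "p \<in> P" "q \<in> P" "ord p q"
  shows "gr_rank x p q = gr_rank y p q"
proof -
  obtain X where X: "is_rep P ord X"
    and iso: "rep_iso P ord (dsum (dsum (fst x) (snd y)) X) (dsum (dsum (fst y) (snd x)) X)"
    using eq unfolding gr_eq_def by blast
  have r: "is_rep P ord (fst x)" "is_rep P ord (snd x)" "is_rep P ord (fst y)" "is_rep P ord (snd y)"
    using gx gy by (auto simp: is_grel_def)
  have "rk (dsum (dsum (fst x) (snd y)) X) p q = rk (dsum (dsum (fst y) (snd x)) X) p q"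
    by (rule rk_iso[OF iso _ _ pq]) (intro is_rep_dsum r X)+
  hence "rk (fst x) p q + rk (snd y) p q + rk X p q = rk (fst y) p q + rk (snd x) p q + rk X p q"
    by (simp add: rk_dsum[OF is_rep_dsum[OF r(1) r(4)] X pq] rk_dsum[OF is_rep_dsum[OF r(3) r(2)] X pq]
        rk_dsum[OF r(1) r(4) pq] rk_dsum[OF r(3) r(2) pq])
  thus ?thesis unfolding gr_rank_def by linarith
qed

text \<open>On [n] the converse holds as well, by the interval decomposition.\<close>

lemma Gr_eq_n_iff_gr_rank:
  fixes x y :: "(nat,'a::field) grel"
  assumes gx: "is_grel (poset_n n) (\<le>) x" and gy: "is_grel (poset_n n) (\<le>) y"
  shows "Gr_eq_n n x y \<longleftrightarrow> (\<forall>i j. i \<le> j \<longrightarrow> j \<le> n \<longrightarrow> gr_rank x i j = gr_rank y i j)"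
proof
  assume "Gr_eq_n n x y"
  thus "\<forall>i j. i \<le> j \<longrightarrow> j \<le> n \<longrightarrow> gr_rank x i j = gr_rank y i j"
    unfolding Gr_eq_n_def using gr_eq_imp_gr_rank_eq[OF _ gx gy] by (auto simp: poset_n_def)
next
  assume h: "\<forall>i j. i \<le> j \<longrightarrow> j \<le> n \<longrightarrow> gr_rank x i j = gr_rank y i j"
  have r: "is_rep {0..n} (\<le>) (fst x)" "is_rep {0..n} (\<le>) (snd x)" "is_rep {0..n} (\<le>) (fst y)" "is_rep {0..n} (\<le>) (snd y)"
    using gx gy by (auto simp: is_grel_def poset_n_def)
  have "rep_iso {0..n} (\<le>) (dsum (dsum (fst x) (snd y)) zero_rep) (dsum (dsum (fst y) (snd x)) zero_rep)"
  proof (rule rep_iso_of_rk)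
    fix i j :: nat assume ij: "i \<le> j" and jn: "j \<le> n"
    have P: "i \<in> {0..n}" "j \<in> {0..n}" using ij jn by auto
    have "gr_rank x i j = gr_rank y i j" using h ij jn by blast
    hence "rk (fst x) i j + rk (snd y) i j = rk (fst y) i j + rk (snd x) i j" unfolding gr_rank_def by linarith
    thus "rk (dsum (dsum (fst x) (snd y)) zero_rep) i j = rk (dsum (dsum (fst y) (snd x)) zero_rep) i j"
      by (simp add: rk_dsum[OF is_rep_dsum[OF r(1) r(4)] is_rep_zero P ij] rk_dsum[OF is_rep_dsum[OF r(3) r(2)] is_rep_zero P ij]
          rk_dsum[OF r(1) r(4) P ij] rk_dsum[OF r(3) r(2) P ij])
  qed (intro is_rep_dsum r is_rep_zero)+
  thus "Gr_eq_n n x y" unfolding Gr_eq_n_def gr_eq_def poset_n_def by (intro exI[of _ zero_rep] conjI is_rep_zero)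
qed

section \<open>The classes of J, S and T\<close>

lemma is_rep_J: "is_rep (P :: nat set) (\<le>) (J a b :: (nat,'a::field) rep)"
  unfolding is_rep_def
proof (intro conjI ballI impI)
  fix i j k :: nat assume ij: "i \<le> j" and jk: "j \<le> k"
  show "snd (J a b :: (nat,'a) rep) i k = snd (J a b) j k * snd (J a b) i j"
  proof (cases "a \<le> i \<and> k \<le> b")
    case True thus ?thesis using ij jk by (simp add: J_def)
  next
    case False
    show ?thesis
    proof (cases "a \<le> i \<and> j \<le> b")
      case True
      hence "\<not> (a \<le> j \<and> k \<le> b)" using False by auto
      thus ?thesis using False True ij jk by (simp add: J_def)
    next
      case False': False
      have "snd (J a b :: (nat,'a) rep) j k \<in> carrier_mat (fst (J a b :: (nat,'a) rep) k) (fst (J a b :: (nat,'a) rep) j)"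
        by (simp add: J_def)
      moreover have "snd (J a b :: (nat,'a) rep) i j = 0\<^sub>m (fst (J a b :: (nat,'a) rep) j) (fst (J a b :: (nat,'a) rep) i)"
        using False' ij by (auto simp: J_def)
      moreover have "snd (J a b :: (nat,'a) rep) i k = 0\<^sub>m (fst (J a b :: (nat,'a) rep) k) (fst (J a b :: (nat,'a) rep) i)"
        using False by (auto simp: J_def)
      ultimately show ?thesis by simp
    qed
  qed
qed (auto simp: J_def intro!: eq_matI)

lemma is_rep_S: "is_rep (P :: nat set) (\<le>) (S_rep :: (nat,'a::field) rep)"
  unfolding is_rep_def S_rep_def by auto

lemma is_grel_J: "is_grel (P :: nat set) (\<le>) (gr_of (J a b) :: (nat,'a::field) grel)"
  by (rule is_grel_of[OF is_rep_J])

lemma is_grel_S: "is_grel (P :: nat set) (\<le>) (gr_of S_rep :: (nat,'a::field) grel)"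
  by (rule is_grel_of[OF is_rep_S])

lemma is_grel_T: "is_grel (P :: nat set) (\<le>) (T_el n :: (nat,'a::field) grel)"
  unfolding T_el_def by (intro is_grel_add is_grel_smul is_grel_J)

lemma gr_rank_J: "i \<le> j \<Longrightarrow> gr_rank (gr_of (J a b) :: (nat,'a::field) grel) i j = of_bool (a \<le> i \<and> j \<le> b)"
  by (cases "a \<le> i \<and> j \<le> b") (auto simp: gr_rank_of rk_def J_def mrank_one mrank_zero)

lemma gr_rank_S: "gr_rank (gr_of S_rep :: (nat,'a::field) grel) i j = of_bool (i = j)"
  by (cases "i = j") (auto simp: gr_rank_of rk_def S_rep_def mrank_one mrank_zero)

lemma gr_rank_T:
  assumes "1 \<le> n" "i \<le> j" "j \<le> n"
  shows "gr_rank (T_el n :: (nat,'a::field) grel) i j = of_bool (\<not> (i = 0 \<and> j = n))"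
proof -
  have P: "i \<in> poset_n n" "j \<in> poset_n n" using assms by (auto simp: poset_n_def)
  show ?thesis
    unfolding T_el_def using assms
    by (simp add: gr_rank_add[OF is_grel_add[OF is_grel_J is_grel_J] is_grel_smul[OF is_grel_J] P]
        gr_rank_add[OF is_grel_J is_grel_J P] gr_rank_smul[OF is_grel_J P] gr_rank_J) linarith
qed

text \<open>The rank invariant of a J + b S + c T.\<close>

definition rank_profile :: "nat \<Rightarrow> int \<Rightarrow> int \<Rightarrow> int \<Rightarrow> nat \<Rightarrow> nat \<Rightarrow> int" where
  "rank_profile n a b c i j = a + b * of_bool (i = j) + c * of_bool (\<not> (i = 0 \<and> j = n))"

lemma rank_profile_eq_iff:
  assumes "2 \<le> n"
  shows "(\<forall>i j. i \<le> j \<longrightarrow> j \<le> n \<longrightarrow> rank_profile n a b c i j = rank_profile n a' b' c' i j) \<longleftrightarrow>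
    (a, b, c) = (a', b', c')"
proof
  assume "\<forall>i j. i \<le> j \<longrightarrow> j \<le> n \<longrightarrow> rank_profile n a b c i j = rank_profile n a' b' c' i j"
  from this[rule_format, of 0 n] this[rule_format, of 0 1] this[rule_format, of 0 0] assms
  show "(a, b, c) = (a', b', c')" by (simp add: rank_profile_def)
qed simp

lemma gr_rank_comb3:
  assumes "1 \<le> n" "i \<le> j" "j \<le> n"
  shows "gr_rank (gr_add (gr_add (gr_smul a (gr_of (J 0 n))) (gr_smul b (gr_of S_rep))) (gr_smul c (T_el n))
      :: (nat,'a::field) grel) i j = rank_profile n a b c i j"
proof -
  have P: "i \<in> poset_n n" "j \<in> poset_n n" using assms by (auto simp: poset_n_def)
  note gJ = is_grel_J[of "poset_n n" 0 n, where 'a='a] and gS = is_grel_S[of "poset_n n", where 'a='a]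
    and gT = is_grel_T[of "poset_n n" n, where 'a='a]
  show ?thesis
    unfolding gr_rank_add[OF is_grel_add[OF is_grel_smul[OF gJ] is_grel_smul[OF gS]] is_grel_smul[OF gT] P assms(2)]
      gr_rank_add[OF is_grel_smul[OF gJ] is_grel_smul[OF gS] P assms(2)] gr_rank_smul[OF gJ P assms(2)]
      gr_rank_smul[OF gS P assms(2)] gr_rank_smul[OF gT P assms(2)]
    using assms by (simp add: gr_rank_J gr_rank_S gr_rank_T rank_profile_def)
qed

lemma gr_rank_comb2:
  assumes "1 \<le> n" "i \<le> j" "j \<le> n"
  shows "gr_rank (gr_add (gr_smul a (gr_of (J 0 n))) (gr_smul c (T_el n)) :: (nat,'a::field) grel) i j
      = rank_profile n a 0 c i j"
proof -
  have P: "i \<in> poset_n n" "j \<in> poset_n n" using assms by (auto simp: poset_n_def)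
  note gJ = is_grel_J[of "poset_n n" 0 n, where 'a='a] and gT = is_grel_T[of "poset_n n" n, where 'a='a]
  show ?thesis
    unfolding gr_rank_add[OF is_grel_smul[OF gJ] is_grel_smul[OF gT] P assms(2)] gr_rank_smul[OF gJ P assms(2)]
      gr_rank_smul[OF gT P assms(2)]
    using assms by (simp add: gr_rank_J gr_rank_T rank_profile_def)
qed

section \<open>The groups E^0 and G^0\<close>

lemma rel1_d0: "p \<in> rel1 n \<Longrightarrow> d0 p \<in> poset_n n" and rel1_d1: "p \<in> rel1 n \<Longrightarrow> d1 p \<in> poset_n n"
  by (auto simp: rel1_def poset_n_def d0_def d1_def)

lemma E_le_d0: "E_le p q \<Longrightarrow> d0 p \<le> d0 q" and E_le_d1: "E_le p q \<Longrightarrow> d1 p \<le> d1 q"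
  by (auto simp: E_le_def d0_def d1_def)

lemma G_le_imp_E_le: "p \<in> rel1 n \<Longrightarrow> q \<in> rel1 n \<Longrightarrow> G_le p q \<Longrightarrow> E_le p q"
  by (auto simp: G_le_def E_le_def rel1_def)

lemma is_rep_pull_E:
  assumes "is_rep (poset_n n) (\<le>) M"
  shows "is_rep (rel1 n) E_le (pull d0 M)" "is_rep (rel1 n) E_le (pull d1 M)"
  by (rule is_rep_pull[OF assms]; simp add: rel1_d0 rel1_d1 E_le_d0 E_le_d1)+

lemma is_grel_pull_E:
  assumes "is_grel (poset_n n) (\<le>) x"
  shows "is_grel (rel1 n) E_le (gr_pull d0 x)" "is_grel (rel1 n) E_le (gr_pull d1 x)"
  by (rule is_grel_pull[OF assms]; simp add: rel1_d0 rel1_d1 E_le_d0 E_le_d1)+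

lemma is_grel_pull_G:
  assumes "is_grel (poset_n n) (\<le>) x"
  shows "is_grel (rel1 n) G_le (gr_pull d0 x)" "is_grel (rel1 n) G_le (gr_pull d1 x)"
  by (rule is_grel_pull[OF assms]; auto simp: rel1_d0 rel1_d1 E_le_d0 E_le_d1 G_le_imp_E_le)+

lemma E0_add: "x \<in> E0 n \<Longrightarrow> y \<in> E0 n \<Longrightarrow> gr_add x y \<in> E0 n"
  by (auto simp: E0_def gr_pull_add intro!: gr_eq_add is_grel_add is_grel_pull_E)

lemma E0_smul: "x \<in> E0 n \<Longrightarrow> gr_smul a x \<in> E0 n"
  by (auto simp: E0_def gr_pull_smul intro!: gr_eq_smul is_grel_smul is_grel_pull_E)

lemma E0_subset_G0: "E0 n \<subseteq> G0 n"
proof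
  fix x assume "x \<in> E0 n"
  hence gx: "is_grel (poset_n n) (\<le>) x" and e: "gr_eq (rel1 n) E_le (gr_pull d0 x) (gr_pull d1 x)"
    by (auto simp: E0_def)
  have "gr_eq (rel1 n) G_le (gr_pull d0 x) (gr_pull d1 x)" by (rule gr_eq_mono[OF e G_le_imp_E_le])
  thus "x \<in> G0 n" using gx by (simp add: G0_def)
qed

lemma J_in_E0: "(gr_of (J 0 n) :: (nat,'a::field) grel) \<in> E0 n"
  unfolding E0_def mem_Collect_eq gr_pull_of
  by (intro conjI is_grel_J gr_eq_of_agree is_rep_pull_E is_rep_J is_rep_zero)
    (auto simp: rep_agree_def J_def pull_def rel1_def E_le_def d0_def d1_def)

lemma S_in_G0: "(gr_of S_rep :: (nat,'a::field) grel) \<in> G0 n"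
  unfolding G0_def mem_Collect_eq gr_pull_of
proof (intro conjI is_grel_S gr_eq_of_agree is_rep_zero)
  show "is_rep (rel1 n) G_le (pull d0 (S_rep :: (nat,'a) rep))"
    by (rule is_rep_pull[OF is_rep_S]) (auto simp: rel1_d0 E_le_d0 G_le_imp_E_le)
  \<comment> \<open>G-related distinct relations share no endpoint, so the zero maps of S agree\<close>
  have "(snd p = snd q) = (fst p = fst q)" if "p \<in> rel1 n" "q \<in> rel1 n" "G_le p q" for p q
    using that by (cases p, cases q) (auto simp: G_le_def rel1_def)
  thus "rep_agree (rel1 n) G_le (pull d0 (S_rep :: (nat,'a) rep)) (pull d1 S_rep)"
    by (simp add: rep_agree_def pull_def S_rep_def d0_def d1_def)
qed

lemma T_el_eq:
  "T_el n = (dsum (dsum (J 0 (n - 1)) (J 1 n)) (dsum zero_rep zero_rep),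
             dsum (dsum zero_rep zero_rep) (dsum (J 1 (n - 1)) zero_rep))"
  by (simp add: T_el_def gr_add_def gr_smul_def gr_of_def)

lemma dsum_strip_zeros:
  assumes a: "is_rep P ord a" and b: "is_rep P ord b" and c: "is_rep P ord c"
  shows "rep_iso P ord (dsum (dsum (dsum a b) (dsum zero_rep zero_rep)) (dsum (dsum zero_rep zero_rep) (dsum c zero_rep)))
    (dsum (dsum a b) c)"
proof -
  have "rep_iso P ord (dsum (dsum a b) (dsum zero_rep zero_rep)) (dsum a b)"
    by (rule rep_iso_trans[OF rep_iso_dsum[OF rep_iso_refl dsum_zero_left] dsum_zero_right])
      (intro is_rep_dsum is_rep_zero a b)+
  moreover have "rep_iso P ord (dsum (dsum zero_rep zero_rep) (dsum c zero_rep)) c"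
    by (rule rep_iso_trans[OF rep_iso_dsum[OF dsum_zero_left rep_iso_refl] rep_iso_trans[OF dsum_zero_left dsum_zero_right]])
      (intro is_rep_dsum is_rep_zero c)+
  ultimately show ?thesis by (rule rep_iso_dsum) (intro is_rep_dsum is_rep_zero a b c)+
qed

text \<open>Over the relations i < j every point of J(1,n) and of J(0,n-1) is hit, so the pullbacks of
  J(0,n-1) along d0 and of J(1,n) along d1 agree with those of J(1,n-1), and the pullbacks of J(1,n)
  along d0 and of J(0,n-1) along d1 are both constant.\<close>

lemma T_in_E0:
  assumes n: "1 \<le> n"
  shows "(T_el n :: (nat,'a::field) grel) \<in> E0 n"
  unfolding E0_def
proof (intro CollectI conjI is_grel_T)
  let ?A0 = "pull d0 (J 0 (n-1) :: (nat,'a) rep)" and ?B0 = "pull d0 (J 1 n :: (nat,'a) rep)"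
    and ?C0 = "pull d0 (J 1 (n-1) :: (nat,'a) rep)" and ?A1 = "pull d1 (J 0 (n-1) :: (nat,'a) rep)"
    and ?B1 = "pull d1 (J 1 n :: (nat,'a) rep)" and ?C1 = "pull d1 (J 1 (n-1) :: (nat,'a) rep)"
  have reps: "is_rep (rel1 n) E_le ?A0" "is_rep (rel1 n) E_le ?B0" "is_rep (rel1 n) E_le ?C0"
    "is_rep (rel1 n) E_le ?A1" "is_rep (rel1 n) E_le ?B1" "is_rep (rel1 n) E_le ?C1"
    using is_rep_pull_E[OF is_rep_J] by blast+
  have "rep_agree (rel1 n) E_le (dsum (dsum ?A0 ?B0) ?C1) (dsum (dsum ?C0 ?A1) ?B1)"
    using n by (intro rep_agree_dsum) (auto simp: rep_agree_def pull_def J_def rel1_def E_le_def d0_def d1_def)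
  hence "rep_iso (rel1 n) E_le (dsum (dsum ?A0 ?B0) ?C1) (dsum (dsum ?C0 ?A1) ?B1)"
    by (rule rep_iso_of_agree[rotated]) (intro is_rep_dsum reps)
  moreover have "rep_iso (rel1 n) E_le (dsum (dsum ?C0 ?A1) ?B1) (dsum (dsum ?A1 ?B1) ?C0)"
    by (rule rep_iso_sym[OF rep_iso_trans[OF dsum_comm rep_iso_sym[OF dsum_assoc]]]) (intro is_rep_dsum reps)+
  ultimately have core: "rep_iso (rel1 n) E_le (dsum (dsum ?A0 ?B0) ?C1) (dsum (dsum ?A1 ?B1) ?C0)"
    by (rule rep_iso_trans) (intro is_rep_dsum reps)+
  have "rep_iso (rel1 n) E_le
      (dsum (dsum (dsum ?A0 ?B0) (dsum zero_rep zero_rep)) (dsum (dsum zero_rep zero_rep) (dsum ?C1 zero_rep)))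
      (dsum (dsum (dsum ?A1 ?B1) (dsum zero_rep zero_rep)) (dsum (dsum zero_rep zero_rep) (dsum ?C0 zero_rep)))"
    by (rule rep_iso_trans[OF dsum_strip_zeros[OF reps(1,2,6)] rep_iso_trans[OF core rep_iso_sym[OF dsum_strip_zeros[OF reps(4,5,3)]]]])
      (intro is_rep_dsum is_rep_zero reps)+
  hence "rep_iso (rel1 n) E_le
      (dsum (dsum (dsum (dsum ?A0 ?B0) (dsum zero_rep zero_rep)) (dsum (dsum zero_rep zero_rep) (dsum ?C1 zero_rep))) zero_rep)
      (dsum (dsum (dsum (dsum ?A1 ?B1) (dsum zero_rep zero_rep)) (dsum (dsum zero_rep zero_rep) (dsum ?C0 zero_rep))) zero_rep)"
    by (rule rep_iso_dsum[OF _ rep_iso_refl]) (intro is_rep_dsum is_rep_zero reps)+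
  hence "rep_iso (rel1 n) E_le
      (dsum (dsum (fst (gr_pull d0 (T_el n :: (nat,'a) grel))) (snd (gr_pull d1 (T_el n :: (nat,'a) grel)))) zero_rep)
      (dsum (dsum (fst (gr_pull d1 (T_el n))) (snd (gr_pull d0 (T_el n)))) zero_rep)"
    unfolding T_el_eq gr_pull_def by (simp add: pull_dsum pull_zero)
  thus "gr_eq (rel1 n) E_le (gr_pull d0 (T_el n :: (nat,'a) grel)) (gr_pull d1 (T_el n))"
    unfolding gr_eq_def by (intro exI[of _ zero_rep] conjI is_rep_zero)
qed

section \<open>Rank invariants of E^0 and G^0\<close>

lemma G0_gr_rank_eq:
  assumes x: "x \<in> G0 n" and ij: "(i,j) \<in> rel1 n" "(i',j') \<in> rel1 n" "G_le (i,j) (i',j')"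
  shows "gr_rank x j j' = gr_rank x i i'"
proof -
  have gx: "is_grel (poset_n n) (\<le>) x" and e: "gr_eq (rel1 n) G_le (gr_pull d0 x) (gr_pull d1 x)"
    using x by (auto simp: G0_def)
  have "gr_rank (gr_pull d0 x) (i,j) (i',j') = gr_rank (gr_pull d1 x) (i,j) (i',j')"
    by (rule gr_eq_imp_gr_rank_eq[OF e is_grel_pull_G[OF gx] ij])
  thus ?thesis by (simp add: gr_rank_pull d0_def d1_def)
qed

text \<open>Comparing the relations 0i, ij and ii', all G-related to relations through n or 0, the
  rank invariant of a G^0 class is constant on the diagonal and constant off it away from 0n.\<close>

lemma G0_gr_rank:
  assumes x: "x \<in> G0 n" and n: "2 \<le> n" and ij: "i \<le> j" "j \<le> n"
  shows "gr_rank x i j = rank_profile n (gr_rank x 0 n) (gr_rank x 0 0 - gr_rank x 0 1) (gr_rank x 0 1 - gr_rank x 0 n) i j"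
proof -
  have diag: "gr_rank x i i = gr_rank x 0 0" if "0 < i" "i \<le> n" for i
    using G0_gr_rank_eq[OF x, of 0 i 0 i] that by (simp add: rel1_def G_le_def)
  have first_row: "gr_rank x 0 a = gr_rank x 1 n" if "1 \<le> a" "a < n" for a
    using G0_gr_rank_eq[OF x, of 0 1 a n] that by (simp add: rel1_def G_le_def)
  have "gr_rank x i j = gr_rank x 0 1" if "i < j" "\<not> (i = 0 \<and> j = n)"
  proof (cases "i = 0")
    case True thus ?thesis using first_row[of j] first_row[of 1] that ij n by simp
  next
    case False
    hence "gr_rank x i j = gr_rank x 0 i" using G0_gr_rank_eq[OF x, of 0 i i j] that ij by (simp add: rel1_def G_le_def)
    thus ?thesis using first_row[of i] first_row[of 1] False that ij n by simp
  qed
  thus ?thesis using diag[of i] ij n by (cases "i = j") (auto simp: rank_profile_def)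
qed

lemma E0_gr_rank:
  assumes x: "x \<in> E0 n" and n: "2 \<le> n"
  shows "gr_rank x 0 1 = gr_rank x 0 0"
proof -
  have gx: "is_grel (poset_n n) (\<le>) x" and e: "gr_eq (rel1 n) E_le (gr_pull d0 x) (gr_pull d1 x)"
    using x by (auto simp: E0_def)
  have "gr_rank (gr_pull d0 x) (0,1) (0,2) = gr_rank (gr_pull d1 x) (0,1) (0,2)"
    by (rule gr_eq_imp_gr_rank_eq[OF e is_grel_pull_E[OF gx]]) (use n in \<open>auto simp: rel1_def E_le_def\<close>)
  hence "gr_rank x 1 2 = gr_rank x 0 0" by (simp add: gr_rank_pull d0_def d1_def)
  moreover have "gr_rank x 1 2 = gr_rank x 0 1"
    using G0_gr_rank[OF subsetD[OF E0_subset_G0 x] n, of 1 2] n by (simp add: rank_profile_def)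
  ultimately show ?thesis by simp
qed

lemma Gr_eq_n_iff_rank_profile:
  fixes x y :: "(nat,'a::field) grel"
  assumes "is_grel (poset_n n) (\<le>) x" "is_grel (poset_n n) (\<le>) y"
    and "\<And>i j. i \<le> j \<Longrightarrow> j \<le> n \<Longrightarrow> gr_rank y i j = rank_profile n a b c i j"
  shows "Gr_eq_n n x y \<longleftrightarrow> (\<forall>i j. i \<le> j \<longrightarrow> j \<le> n \<longrightarrow> gr_rank x i j = rank_profile n a b c i j)"
  using assms by (simp add: Gr_eq_n_iff_gr_rank)

lemma rank_profile_match:
  assumes n: "2 \<le> n" and f: "\<And>i j. i \<le> j \<Longrightarrow> j \<le> n \<Longrightarrow> f i j = rank_profile n a0 b0 c0 i j"
  shows "(\<forall>i j. i \<le> j \<longrightarrow> j \<le> n \<longrightarrow> f i j = rank_profile n a b c i j) \<longleftrightarrow> (a, b, c) = (a0, b0, c0)"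
proof -
  have "(\<forall>i j. i \<le> j \<longrightarrow> j \<le> n \<longrightarrow> f i j = rank_profile n a b c i j) \<longleftrightarrow>
      (\<forall>i j. i \<le> j \<longrightarrow> j \<le> n \<longrightarrow> rank_profile n a0 b0 c0 i j = rank_profile n a b c i j)"
    using f by auto
  also have "\<dots> \<longleftrightarrow> (a0, b0, c0) = (a, b, c)" by (rule rank_profile_eq_iff[OF n])
  finally show ?thesis by auto
qed

lemma E0_gr_rank_profile:
  assumes x: "x \<in> E0 n" and n: "2 \<le> n" and ij: "i \<le> j" "j \<le> n"
  shows "gr_rank x i j = rank_profile n (gr_rank x 0 n) 0 (gr_rank x 0 1 - gr_rank x 0 n) i j"
  using G0_gr_rank[OF subsetD[OF E0_subset_G0 x] n ij] E0_gr_rank[OF x n] by simp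

lemma G0_coordinates:
  assumes n: "2 \<le> n" and x: "(x :: (nat,'a::field) grel) \<in> G0 n"
  shows "\<exists>!t::int \<times> int \<times> int. Gr_eq_n n x
    (gr_add (gr_add (gr_smul (fst t) (gr_of (J 0 n))) (gr_smul (fst (snd t)) (gr_of S_rep))) (gr_smul (snd (snd t)) (T_el n)))"
proof -
  have gx: "is_grel (poset_n n) (\<le>) x" using x by (simp add: G0_def)
  let ?t0 = "(gr_rank x 0 n, gr_rank x 0 0 - gr_rank x 0 1, gr_rank x 0 1 - gr_rank x 0 n)"
  have "Gr_eq_n n x (gr_add (gr_add (gr_smul a (gr_of (J 0 n))) (gr_smul b (gr_of S_rep))) (gr_smul c (T_el n)))
      \<longleftrightarrow> (a, b, c) = (gr_rank x 0 n, gr_rank x 0 0 - gr_rank x 0 1, gr_rank x 0 1 - gr_rank x 0 n)"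
    (is "?lhs \<longleftrightarrow> ?rhs") for a b c
  proof -
    have "is_grel (poset_n n) (\<le>) (gr_add (gr_add (gr_smul a (gr_of (J 0 n))) (gr_smul b (gr_of S_rep)))
        (gr_smul c (T_el n)) :: (nat,'a) grel)"
      by (intro is_grel_add is_grel_smul is_grel_J is_grel_S is_grel_T)
    moreover have "gr_rank (gr_add (gr_add (gr_smul a (gr_of (J 0 n))) (gr_smul b (gr_of S_rep))) (gr_smul c (T_el n))
        :: (nat,'a) grel) i j = rank_profile n a b c i j" if "i \<le> j" "j \<le> n" for i j
      by (rule gr_rank_comb3) (use n that in auto)
    ultimately have "?lhs \<longleftrightarrow> (\<forall>i j. i \<le> j \<longrightarrow> j \<le> n \<longrightarrow> gr_rank x i j = rank_profile n a b c i j)" by (rule Gr_eq_n_iff_rank_profile[OF gx])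
    also have "(\<forall>i j. i \<le> j \<longrightarrow> j \<le> n \<longrightarrow> gr_rank x i j = rank_profile n a b c i j) \<longleftrightarrow> ?rhs" by (rule rank_profile_match[OF n G0_gr_rank[OF x n]])
    finally show ?thesis .
  qed
  note iff = this
  show ?thesis
  proof (rule ex1I)
    show "Gr_eq_n n x (gr_add (gr_add (gr_smul (fst ?t0) (gr_of (J 0 n))) (gr_smul (fst (snd ?t0)) (gr_of S_rep)))
        (gr_smul (snd (snd ?t0)) (T_el n)))"
      using iff by simp
    fix t :: "int \<times> int \<times> int"
    assume "Gr_eq_n n x (gr_add (gr_add (gr_smul (fst t) (gr_of (J 0 n))) (gr_smul (fst (snd t)) (gr_of S_rep)))
        (gr_smul (snd (snd t)) (T_el n)))"
    thus "t = ?t0" using iff[of "fst t" "fst (snd t)" "snd (snd t)"] by simp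
  qed
qed

lemma E0_coordinates:
  assumes n: "2 \<le> n" and x: "(x :: (nat,'a::field) grel) \<in> E0 n"
  shows "\<exists>!t::int \<times> int. Gr_eq_n n x (gr_add (gr_smul (fst t) (gr_of (J 0 n))) (gr_smul (snd t) (T_el n)))"
proof -
  have gx: "is_grel (poset_n n) (\<le>) x" using x by (simp add: E0_def)
  let ?t0 = "(gr_rank x 0 n, gr_rank x 0 1 - gr_rank x 0 n)"
  have "Gr_eq_n n x (gr_add (gr_smul a (gr_of (J 0 n))) (gr_smul c (T_el n)))
      \<longleftrightarrow> (a, 0, c) = (gr_rank x 0 n, 0, gr_rank x 0 1 - gr_rank x 0 n)"
    (is "?lhs \<longleftrightarrow> ?rhs") for a c
  proof -
    have "is_grel (poset_n n) (\<le>) (gr_add (gr_smul a (gr_of (J 0 n))) (gr_smul c (T_el n)) :: (nat,'a) grel)"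
      by (intro is_grel_add is_grel_smul is_grel_J is_grel_T)
    moreover have "gr_rank (gr_add (gr_smul a (gr_of (J 0 n))) (gr_smul c (T_el n)) :: (nat,'a) grel) i j
        = rank_profile n a 0 c i j" if "i \<le> j" "j \<le> n" for i j
      by (rule gr_rank_comb2) (use n that in auto)
    ultimately have "?lhs \<longleftrightarrow> (\<forall>i j. i \<le> j \<longrightarrow> j \<le> n \<longrightarrow> gr_rank x i j = rank_profile n a 0 c i j)" by (rule Gr_eq_n_iff_rank_profile[OF gx])
    also have "(\<forall>i j. i \<le> j \<longrightarrow> j \<le> n \<longrightarrow> gr_rank x i j = rank_profile n a 0 c i j) \<longleftrightarrow> ?rhs" using rank_profile_match[OF n E0_gr_rank_profile[OF x n], of a 0 c] by simp
    finally show ?thesis .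
  qed
  note iff = this
  show ?thesis
  proof (rule ex1I)
    show "Gr_eq_n n x (gr_add (gr_smul (fst ?t0) (gr_of (J 0 n))) (gr_smul (snd ?t0) (T_el n)))"
      using iff by simp
    fix t :: "int \<times> int"
    assume "Gr_eq_n n x (gr_add (gr_smul (fst t) (gr_of (J 0 n))) (gr_smul (snd t) (T_el n)))"
    thus "t = ?t0" using iff[of "fst t" "snd t"] by (simp add: prod_eq_iff)
  qed
qed

lemma G0_S_coefficient:
  assumes n: "2 \<le> n" and x: "(x :: (nat,'a::field) grel) \<in> G0 n"
  shows "\<exists>!a::int. \<exists>e\<in>E0 n. Gr_eq_n n x (gr_add e (gr_smul a (gr_of S_rep)))"
proof -
  have gx: "is_grel (poset_n n) (\<le>) x" using x by (simp add: G0_def)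
  have key: "Gr_eq_n n x (gr_add e (gr_smul a (gr_of S_rep))) \<longleftrightarrow>
      (gr_rank e 0 n, a, gr_rank e 0 1 - gr_rank e 0 n)
        = (gr_rank x 0 n, gr_rank x 0 0 - gr_rank x 0 1, gr_rank x 0 1 - gr_rank x 0 n)"
    (is "?lhs \<longleftrightarrow> ?rhs") if e: "e \<in> E0 n" for e a
  proof -
    have ge: "is_grel (poset_n n) (\<le>) e" using e by (simp add: E0_def)
    have "gr_rank (gr_add e (gr_smul a (gr_of S_rep))) i j
        = rank_profile n (gr_rank e 0 n) a (gr_rank e 0 1 - gr_rank e 0 n) i j" if "i \<le> j" "j \<le> n" for i j
    proof -
      have P: "i \<in> poset_n n" "j \<in> poset_n n" using that by (auto simp: poset_n_def)
      show ?thesis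
        unfolding gr_rank_add[OF ge is_grel_smul[OF is_grel_S] P that(1)] gr_rank_smul[OF is_grel_S P that(1)]
          E0_gr_rank_profile[OF e n that] by (simp add: gr_rank_S rank_profile_def)
    qed
    hence "?lhs \<longleftrightarrow> (\<forall>i j. i \<le> j \<longrightarrow> j \<le> n \<longrightarrow> gr_rank x i j = rank_profile n (gr_rank e 0 n) a (gr_rank e 0 1 - gr_rank e 0 n) i j)" by (rule Gr_eq_n_iff_rank_profile[OF gx is_grel_add[OF ge is_grel_smul[OF is_grel_S]]])
    also have "(\<forall>i j. i \<le> j \<longrightarrow> j \<le> n \<longrightarrow> gr_rank x i j = rank_profile n (gr_rank e 0 n) a (gr_rank e 0 1 - gr_rank e 0 n) i j) \<longleftrightarrow> ?rhs" by (rule rank_profile_match[OF n G0_gr_rank[OF x n]])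
    finally show ?thesis .
  qed
  define e where "e = (gr_add (gr_smul (gr_rank x 0 n) (gr_of (J 0 n))) (gr_smul (gr_rank x 0 1 - gr_rank x 0 n) (T_el n))
    :: (nat,'a) grel)"
  have e: "e \<in> E0 n" unfolding e_def using n by (intro E0_add E0_smul J_in_E0 T_in_E0) simp
  have "gr_rank e 0 n = gr_rank x 0 n" "gr_rank e 0 1 = gr_rank x 0 1"
    using n by (simp_all add: e_def gr_rank_comb2 rank_profile_def)
  hence "Gr_eq_n n x (gr_add e (gr_smul (gr_rank x 0 0 - gr_rank x 0 1) (gr_of S_rep)))" by (simp add: key[OF e])
  moreover have "a = gr_rank x 0 0 - gr_rank x 0 1" if "e' \<in> E0 n" "Gr_eq_n n x (gr_add e' (gr_smul a (gr_of S_rep)))" for a e'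
    using key[OF that(1)] that(2) by simp
  ultimately show ?thesis using e by blast
qed

theorem proposition5p2:
  fixes n :: nat
  assumes "n \<ge> 2"
  shows "let Jn = (gr_of (J 0 n) :: (nat,'a::field) grel);
             Sn = (gr_of S_rep :: (nat,'a) grel);
             Tn = (T_el n :: (nat,'a) grel)
         in {Jn, Sn, Tn} \<subseteq> G0 n
          \<and> (\<forall>x\<in>G0 n. \<exists>!t::int\<times>int\<times>int.
               Gr_eq_n n x (gr_add (gr_add (gr_smul (fst t) Jn) (gr_smul (fst (snd t)) Sn))
                                   (gr_smul (snd (snd t)) Tn)))
          \<and> {Jn, Tn} \<subseteq> E0 n
          \<and> (\<forall>x\<in>E0 n. \<exists>!t::int\<times>int.
               Gr_eq_n n x (gr_add (gr_smul (fst t) Jn) (gr_smul (snd t) Tn)))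
          \<and> E0 n \<subseteq> G0 n
          \<and> (\<forall>x\<in>G0 n. \<exists>!a::int. \<exists>e\<in>E0 n. Gr_eq_n n x (gr_add e (gr_smul a Sn)))"
proof -
  have T: "(T_el n :: (nat,'a) grel) \<in> E0 n" by (rule T_in_E0) (use assms in simp)
  show ?thesis
    unfolding Let_def
  proof (intro conjI)
    show "{gr_of (J 0 n), gr_of S_rep, T_el n} \<subseteq> (G0 n :: (nat,'a) grel set)"
      using J_in_E0 T S_in_G0 E0_subset_G0 by blast
    show "{gr_of (J 0 n), T_el n} \<subseteq> (E0 n :: (nat,'a) grel set)" using J_in_E0 T by blast
  qed (intro ballI G0_coordinates[OF assms] E0_coordinates[OF assms] G0_S_coefficient[OF assms] E0_subset_G0; assumption)+
qed

end
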